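(* Fix $\varepsilon>0$ and $\gamma\in(0,1)$, and let $d_N=(1-\gamma)\sqrt{\frac{\log N}{2\log\log N}}$. For a group $G$ of order $N$, an integer $d$ with $2\leqslant d\leqslant d_N$, and $p\geqslant \sqrt[d]{d!(1+\varepsilon)\frac{\log N}{N^{d-1}}}$, let $\Gamma\in\mathcal{G}(G,p)$. Then with high probability the diameter of $\Gamma$ is at most $d$; that is, $\Pr(\operatorname{diam}(\Gamma)>d)\to 0$ as $N\to\infty$, uniformly over all groups $G$ of order $N$, all such $d$ and all such $p$.
   Context: For a group $G$ and a subset $S\subseteq G$, the (undirected) Cayley graph $\Gamma(G;S)$ has vertex set $G$ and an edge between $g\neq h$ iff $g^{-1}h\in S$ or $h^{-1}g\in S$ (loops and multiple edges ignored). The model $\mathcal{G}(G,p)$ is the probability space of Cayley graphs $\Gamma(G;S)$ where each element of $G$ is put in $S$ independently with probability $p$. The diameter of a disconnected graph is infinite. "With high probability" means the error probability tends to $0$ as $N\to\infty$, uniformly over the class of groups under consideration. *)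

theory Defs
  imports "HOL-Algebra.Group" "HOL-Probability.Probability" "HOL-Library.Extended_Nat"
begin

definition cayley_adj :: "('a, 'b) monoid_scheme \<Rightarrow> 'a set \<Rightarrow> 'a \<Rightarrow> 'a \<Rightarrow> bool" where
  "cayley_adj G S g h \<longleftrightarrow> g \<in> carrier G \<and> h \<in> carrier G \<and> g \<noteq> h \<and>
     (inv\<^bsub>G\<^esub> g \<otimes>\<^bsub>G\<^esub> h \<in> S \<or> inv\<^bsub>G\<^esub> h \<otimes>\<^bsub>G\<^esub> g \<in> S)"

text \<open>Graph distance: least length of a walk; infinite if no walk exists.\<close>
definition cayley_dist :: "('a, 'b) monoid_scheme \<Rightarrow> 'a set \<Rightarrow> 'a \<Rightarrow> 'a \<Rightarrow> enat" where
  "cayley_dist G S g h = (INF n \<in> {n. (cayley_adj G S ^^ n) g h}. enat n)"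

definition cayley_diam :: "('a, 'b) monoid_scheme \<Rightarrow> 'a set \<Rightarrow> enat" where
  "cayley_diam G S = (SUP g \<in> carrier G. SUP h \<in> carrier G. cayley_dist G S g h)"

definition d_bound :: "real \<Rightarrow> nat \<Rightarrow> real" where
  "d_bound \<gamma> N = (1 - \<gamma>) * sqrt (ln (real N) / (2 * ln (ln (real N))))"

definition random_subset :: "('a, 'b) monoid_scheme \<Rightarrow> real \<Rightarrow> ('a \<Rightarrow> bool) pmf" where
  "random_subset G p = Pi_pmf (carrier G) False (\<lambda>_. bernoulli_pmf p)"

end

theory Submission
  imports Defs "HOL-Real_Asymp.Real_Asymp"
begin

(* By left invariance and a union bound over the vertices k other than 1, it suffices that for
   each such k the probability that no walk of length at most d joins 1 to k is at most
   N^-(1+eps/2); since this event is decreasing in S, p may be lowered to the threshold p0 with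
   p0^d = d! (1+eps) log N / N^(d-1).
   Such a walk exists as soon as S contains the letter set of a factorization k = x_1 ... x_d into
   distinct non-identity letters. Almost all of the N^(d-1) factorizations of k are of this kind
   and each letter set comes from at most d! of them, so Janson's inequality (derived here from
   Harris' inequality) bounds the failure probability by exp(-mu + Delta) with
   mu >= (1 + eps - o(1)) log N. Letter sets sharing j letters contribute p0^(2d-j) to Delta, and
   the resulting sum over j is negligible as long as d^2 <= log N / (2 log log N), which is where
   the bound d_N comes from. For d = 2 an element k with a positive fraction of the group as
   square roots is reached through one of them instead. *)

section \<open>Random subsets of a finite set\<close>

definition subset_prob :: "real \<Rightarrow> 'a set \<Rightarrow> ('a set \<Rightarrow> bool) \<Rightarrow> real" where
  "subset_prob p U P = (\<Sum>S\<in>{S. S \<subseteq> U \<and> P S}. p ^ card S * (1 - p) ^ card (U - S))"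

lemma subset_prob_empty: "subset_prob p {} P = (if P {} then 1 else 0)"
proof -
  have "{S. S \<subseteq> {} \<and> P S} = (if P {} then {{}} else {})" by auto
  then show ?thesis by (simp add: subset_prob_def)
qed

lemma subset_prob_insert:
  assumes "finite U" "a \<notin> U"
  shows "subset_prob p (insert a U) P =
           (1 - p) * subset_prob p U P + p * subset_prob p U (\<lambda>S. P (insert a S))"
proof -
  let ?w = "\<lambda>V S. p ^ card S * (1 - p) ^ card (V - S)"
  let ?out = "{S. S \<subseteq> U \<and> P S}" and ?inn = "{S. S \<subseteq> U \<and> P (insert a S)}"
  have split: "{S. S \<subseteq> insert a U \<and> P S} = ?out \<union> insert a ` ?inn"
  proof (intro equalityI subsetI)
    fix S assume S: "S \<in> {S. S \<subseteq> insert a U \<and> P S}"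
    show "S \<in> ?out \<union> insert a ` ?inn"
    proof (cases "a \<in> S")
      case True
      with S assms(2) have "S - {a} \<in> ?inn" by (auto simp: insert_absorb)
      then show ?thesis using True by (auto intro!: image_eqI[of _ _ "S - {a}"])
    qed (use S in auto)
  qed auto
  have fin: "finite ?out" "finite (insert a ` ?inn)"
    using assms by (auto intro: finite_subset[of _ "Pow U"])
  have disj: "?out \<inter> insert a ` ?inn = {}" using assms by auto
  have inj: "inj_on (insert a) ?inn" using assms by (auto simp: inj_on_def)
  have out: "?w (insert a U) S = (1 - p) * ?w U S" if "S \<subseteq> U" for S
  proof -
    have "insert a U - S = insert a (U - S)" using that assms by auto
    then show ?thesis using assms by simp
  qed
  have inn: "?w (insert a U) (insert a S) = p * ?w U S" if "S \<subseteq> U" for S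
  proof -
    have "finite S" "a \<notin> S" using that assms finite_subset by auto
    moreover have "insert a U - insert a S = U - S" using that assms by auto
    ultimately show ?thesis by simp
  qed
  have "(\<Sum>S\<in>?out. ?w (insert a U) S) = (1 - p) * subset_prob p U P"
    unfolding subset_prob_def sum_distrib_left by (rule sum.cong[OF refl]) (rule out, blast)
  moreover have "(\<Sum>S\<in>?inn. ?w (insert a U) (insert a S)) = p * subset_prob p U (\<lambda>S. P (insert a S))"
    unfolding subset_prob_def sum_distrib_left by (rule sum.cong[OF refl]) (rule inn, blast)
  ultimately show ?thesis
    unfolding subset_prob_def[of p "insert a U"] split sum.union_disjoint[OF fin disj] sum.reindex[OF inj]
    by (simp add: subset_prob_def)
qed

lemma subset_prob_nonneg: "0 \<le> p \<Longrightarrow> p \<le> 1 \<Longrightarrow> 0 \<le> subset_prob p U P"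
  unfolding subset_prob_def by (intro sum_nonneg) auto

lemma subset_prob_cong: "(\<And>S. S \<subseteq> U \<Longrightarrow> P S = Q S) \<Longrightarrow> subset_prob p U P = subset_prob p U Q"
  unfolding subset_prob_def by (rule sum.cong) auto

lemma subset_prob_mono:
  assumes "finite U" "0 \<le> p" "p \<le> 1" "\<And>S. S \<subseteq> U \<Longrightarrow> P S \<Longrightarrow> Q S"
  shows "subset_prob p U P \<le> subset_prob p U Q"
  unfolding subset_prob_def
  by (rule sum_mono2) (use assms in \<open>auto intro: finite_subset[of _ "Pow U"]\<close>)

lemma subset_prob_True: "finite U \<Longrightarrow> subset_prob p U (\<lambda>_. True) = 1"
  by (induction U rule: finite_induct) (auto simp: subset_prob_empty subset_prob_insert)

lemma subset_prob_split:
  assumes "finite U"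
  shows "subset_prob p U P = subset_prob p U (\<lambda>S. P S \<and> Q S) + subset_prob p U (\<lambda>S. P S \<and> \<not> Q S)"
proof -
  have "{S. S \<subseteq> U \<and> P S} = {S. S \<subseteq> U \<and> P S \<and> Q S} \<union> {S. S \<subseteq> U \<and> P S \<and> \<not> Q S}" by auto
  moreover have "finite {S. S \<subseteq> U \<and> P S \<and> Q S}" "finite {S. S \<subseteq> U \<and> P S \<and> \<not> Q S}"
    using assms by (auto intro: finite_subset[of _ "Pow U"])
  ultimately show ?thesis unfolding subset_prob_def
    by (subst sum.union_disjoint[symmetric]) auto
qed

lemma subset_prob_union_bound:
  assumes "finite U" "finite J" "0 \<le> p" "p \<le> 1"
  shows "subset_prob p U (\<lambda>S. P S \<and> (\<exists>j\<in>J. Q j S)) \<le> (\<Sum>j\<in>J. subset_prob p U (\<lambda>S. P S \<and> Q j S))"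
  using assms(2)
proof (induction J rule: finite_induct)
  case empty
  then show ?case by (simp add: subset_prob_def)
next
  case (insert j J)
  let ?R = "\<lambda>S. P S \<and> (\<exists>j\<in>insert j J. Q j S)"
  have "subset_prob p U ?R = subset_prob p U (\<lambda>S. ?R S \<and> Q j S) + subset_prob p U (\<lambda>S. ?R S \<and> \<not> Q j S)"
    by (rule subset_prob_split[OF assms(1)])
  also have "\<dots> \<le> subset_prob p U (\<lambda>S. P S \<and> Q j S) + subset_prob p U (\<lambda>S. P S \<and> (\<exists>j\<in>J. Q j S))"
    by (intro add_mono subset_prob_mono assms) auto
  finally show ?case using insert by simp
qed

lemma mono_insert: "mono P \<Longrightarrow> mono (\<lambda>S. P (insert a S))"
  unfolding mono_def by (meson Set.insert_mono)

lemma antimono_insert: "antimono Q \<Longrightarrow> antimono (\<lambda>S. Q (insert a S))"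
  unfolding antimono_def by (meson Set.insert_mono)

lemma mono_superset: "mono (\<lambda>S. X \<subseteq> S)"
  by (rule monoI) (simp add: order_trans)

lemma harris_inequality:
  assumes "finite U" "0 \<le> p" "p \<le> 1" "mono P" "antimono Q"
  shows "subset_prob p U (\<lambda>S. P S \<and> Q S) \<le> subset_prob p U P * subset_prob p U Q"
  using assms(1,4,5)
proof (induction U arbitrary: P Q rule: finite_induct)
  case empty
  then show ?case by (simp add: subset_prob_empty)
next
  case (insert a U)
  let ?P1 = "\<lambda>S. P (insert a S)" and ?Q1 = "\<lambda>S. Q (insert a S)"
  have mono1: "mono ?P1" using insert.prems(1) by (rule mono_insert)
  have antimono1: "antimono ?Q1" using insert.prems(2) by (rule antimono_insert)
  have "P S \<Longrightarrow> P (insert a S)" for S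
    by (metis monoD[OF insert.prems(1)] le_boolD subset_insertI)
  then have P_le: "subset_prob p U P \<le> subset_prob p U ?P1"
    by (intro subset_prob_mono) (use insert assms in auto)
  have "Q (insert a S) \<Longrightarrow> Q S" for S
    by (metis antimonoD[OF insert.prems(2)] le_boolD subset_insertI)
  then have Q_le: "subset_prob p U ?Q1 \<le> subset_prob p U Q"
    by (intro subset_prob_mono) (use insert assms in auto)
  \<comment> \<open>Chebyshev's sum inequality for the two-point distribution of the new element.\<close>
  have cross: "0 \<le> p * (1 - p) * ((subset_prob p U ?P1 - subset_prob p U P) * (subset_prob p U Q - subset_prob p U ?Q1))"
    using assms P_le Q_le by (intro mult_nonneg_nonneg) auto
  have "subset_prob p (insert a U) (\<lambda>S. P S \<and> Q S) =
      (1 - p) * subset_prob p U (\<lambda>S. P S \<and> Q S) + p * subset_prob p U (\<lambda>S. ?P1 S \<and> ?Q1 S)"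
    using insert by (simp add: subset_prob_insert)
  also have "\<dots> \<le> (1 - p) * (subset_prob p U P * subset_prob p U Q) + p * (subset_prob p U ?P1 * subset_prob p U ?Q1)"
    using insert.IH[OF insert.prems] insert.IH[OF mono1 antimono1] assms by (intro add_mono mult_left_mono) auto
  also have "\<dots> \<le> ((1 - p) * subset_prob p U P + p * subset_prob p U ?P1) *
                  ((1 - p) * subset_prob p U Q + p * subset_prob p U ?Q1)"
    using cross by (simp add: algebra_simps)
  also have "\<dots> = subset_prob p (insert a U) P * subset_prob p (insert a U) Q"
    using insert by (simp add: subset_prob_insert)
  finally show ?case .
qed

lemma subset_prob_antimono_in_p:
  assumes "finite U" "0 \<le> p" "p \<le> p'" "p' \<le> 1" "antimono Q"
  shows "subset_prob p' U Q \<le> subset_prob p U Q"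
  using assms(1,5)
proof (induction U arbitrary: Q rule: finite_induct)
  case empty
  then show ?case by (simp add: subset_prob_empty)
next
  case (insert a U)
  let ?Q1 = "\<lambda>S. Q (insert a S)"
  have antimono1: "antimono ?Q1" using insert.prems by (rule antimono_insert)
  have "Q (insert a S) \<Longrightarrow> Q S" for S
    by (metis antimonoD[OF insert.prems] le_boolD subset_insertI)
  then have Q_le: "subset_prob p U ?Q1 \<le> subset_prob p U Q"
    by (intro subset_prob_mono) (use insert assms in auto)
  have "subset_prob p' (insert a U) Q = (1 - p') * subset_prob p' U Q + p' * subset_prob p' U ?Q1"
    using insert by (simp add: subset_prob_insert)
  also have "\<dots> \<le> (1 - p') * subset_prob p U Q + p' * subset_prob p U ?Q1"
    using insert.IH[OF insert.prems] insert.IH[OF antimono1] assms by (intro add_mono mult_left_mono) auto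
  also have "\<dots> \<le> (1 - p) * subset_prob p U Q + p * subset_prob p U ?Q1"
  proof -
    have "0 \<le> (p' - p) * (subset_prob p U Q - subset_prob p U ?Q1)" using Q_le assms by simp
    then show ?thesis by (simp add: algebra_simps)
  qed
  also have "\<dots> = subset_prob p (insert a U) Q" using insert by (simp add: subset_prob_insert)
  finally show ?case .
qed

lemma subset_prob_superset_conj:
  assumes "finite U" "X \<subseteq> U" "\<And>S. Q S = Q (S - X)"
  shows "subset_prob p U (\<lambda>S. X \<subseteq> S \<and> Q S) = p ^ card X * subset_prob p U Q"
  using assms
proof (induction U arbitrary: X Q rule: finite_induct)
  case empty
  then show ?case by (simp add: subset_prob_empty)
next
  case (insert a U)
  show ?case
  proof (cases "a \<in> X")
    case True
    have Q_a: "Q (insert a S) = Q S" for S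
      using insert.prems(2)[of "insert a S"] insert.prems(2)[of S] True by (simp add: insert_Diff_if)
    have "subset_prob p U (\<lambda>S. X \<subseteq> S \<and> Q S) = 0"
      using True insert.hyps(2) unfolding subset_prob_def
      by (intro sum.neutral) auto
    moreover have "subset_prob p U (\<lambda>S. X - {a} \<subseteq> S \<and> Q S) = p ^ card (X - {a}) * subset_prob p U Q"
    proof (rule insert.IH)
      show "X - {a} \<subseteq> U" using insert True by auto
      show "Q S = Q (S - (X - {a}))" for S
      proof -
        have "Q S = Q (insert a (S - X))" using insert.prems(2)[of S] Q_a by simp
        also have "insert a (S - X) = insert a (S - (X - {a}))" by auto
        finally show ?thesis using Q_a by simp
      qed
    qed
    moreover have "(\<lambda>S. X \<subseteq> insert a S \<and> Q (insert a S)) = (\<lambda>S. X - {a} \<subseteq> S \<and> Q S)"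
      using Q_a by (auto simp: fun_eq_iff)
    moreover have "card X = Suc (card (X - {a}))"
      using True insert by (metis card_Suc_Diff1 finite_insert finite_subset)
    ultimately show ?thesis using insert by (simp add: subset_prob_insert Q_a algebra_simps)
  next
    case False
    then have XU: "X \<subseteq> U" using insert by auto
    have Q_a: "Q (insert a S) = Q (insert a (S - X))" for S
      using insert.prems(2)[of "insert a S"] False by (metis insert_Diff_if)
    have "subset_prob p (insert a U) (\<lambda>S. X \<subseteq> S \<and> Q S) =
      (1 - p) * subset_prob p U (\<lambda>S. X \<subseteq> S \<and> Q S) + p * subset_prob p U (\<lambda>S. X \<subseteq> S \<and> Q (insert a S))"
      using insert False by (simp add: subset_prob_insert subset_insert)
    also have "\<dots> = p ^ card X * subset_prob p (insert a U) Q"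
      using insert.IH[of X Q, OF XU insert.prems(2)] insert.IH[of X "\<lambda>S. Q (insert a S)", OF XU Q_a] insert.hyps
      by (simp add: subset_prob_insert algebra_simps)
    finally show ?thesis .
  qed
qed

lemma subset_prob_superset:
  assumes "finite U" "X \<subseteq> U"
  shows "subset_prob p U (\<lambda>S. X \<subseteq> S) = p ^ card X"
  using subset_prob_superset_conj[OF assms, of "\<lambda>_. True" p] subset_prob_True[OF assms(1)] by simp

lemma subset_prob_superset_overlap_le:
  assumes U: "finite U" and J: "finite J" and A: "A \<subseteq> U" "\<And>j. j \<in> J \<Longrightarrow> B j \<subseteq> U"
    and p: "0 \<le> p" "p \<le> 1" and E: "antimono E"
  shows "subset_prob p U (\<lambda>S. (A \<subseteq> S \<and> E S) \<and> (\<exists>j\<in>J. B j \<subseteq> S))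
           \<le> (\<Sum>j\<in>J. p ^ card (A \<union> B j)) * subset_prob p U E"
proof -
  have "subset_prob p U (\<lambda>S. (A \<subseteq> S \<and> E S) \<and> (\<exists>j\<in>J. B j \<subseteq> S))
      \<le> (\<Sum>j\<in>J. subset_prob p U (\<lambda>S. (A \<subseteq> S \<and> E S) \<and> B j \<subseteq> S))"
    by (rule subset_prob_union_bound[OF U J p])
  also have "\<dots> \<le> (\<Sum>j\<in>J. p ^ card (A \<union> B j) * subset_prob p U E)"
  proof (rule sum_mono)
    fix j assume "j \<in> J"
    then have AB: "A \<union> B j \<subseteq> U" using A by auto
    have "subset_prob p U (\<lambda>S. (A \<subseteq> S \<and> E S) \<and> B j \<subseteq> S) = subset_prob p U (\<lambda>S. A \<union> B j \<subseteq> S \<and> E S)"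
      by (rule subset_prob_cong) auto
    also have "\<dots> \<le> subset_prob p U (\<lambda>S. A \<union> B j \<subseteq> S) * subset_prob p U E"
      by (rule harris_inequality[OF U p mono_superset E])
    also have "subset_prob p U (\<lambda>S. A \<union> B j \<subseteq> S) = p ^ card (A \<union> B j)"
      by (rule subset_prob_superset[OF U AB])
    finally show "subset_prob p U (\<lambda>S. (A \<subseteq> S \<and> E S) \<and> B j \<subseteq> S) \<le> p ^ card (A \<union> B j) * subset_prob p U E" .
  qed
  finally show ?thesis by (simp add: sum_distrib_right)
qed

lemma janson_step:
  assumes U: "finite U" and I: "finite I" and A: "A \<subseteq> U" "\<And>j. j \<in> I \<Longrightarrow> B j \<subseteq> U"
    and p: "0 \<le> p" "p \<le> 1"
  shows "subset_prob p U (\<lambda>S. \<forall>j\<in>I. \<not> B j \<subseteq> S) *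
           (p ^ card A - (\<Sum>j\<in>{j\<in>I. A \<inter> B j \<noteq> {}}. p ^ card (A \<union> B j)))
         \<le> subset_prob p U (\<lambda>S. (\<forall>j\<in>I. \<not> B j \<subseteq> S) \<and> A \<subseteq> S)"
proof -
  define C where "C = (\<lambda>S. \<forall>j\<in>I. \<not> B j \<subseteq> S)"
  define J where "J = {j\<in>I. A \<inter> B j \<noteq> {}}"
  define E where "E = (\<lambda>S. \<forall>j\<in>I - J. \<not> B j \<subseteq> S)"
  define \<sigma> where "\<sigma> = (\<Sum>j\<in>J. p ^ card (A \<union> B j))"
  \<comment> \<open>\<open>E\<close> only involves the events disjoint from \<open>A\<close>, hence is independent of \<open>A \<subseteq> S\<close>.\<close>
  have E_antimono: "antimono E" unfolding E_def by (rule antimonoI) auto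
  have indep: "subset_prob p U (\<lambda>S. A \<subseteq> S \<and> E S) = p ^ card A * subset_prob p U E"
    by (rule subset_prob_superset_conj[OF U A(1)]) (unfold E_def J_def, blast)
  have "(\<lambda>S. (A \<subseteq> S \<and> E S) \<and> \<not> (\<exists>j\<in>J. B j \<subseteq> S)) = (\<lambda>S. C S \<and> A \<subseteq> S)"
    unfolding C_def E_def J_def by (auto simp: fun_eq_iff)
  then have "subset_prob p U (\<lambda>S. A \<subseteq> S \<and> E S) =
      subset_prob p U (\<lambda>S. (A \<subseteq> S \<and> E S) \<and> (\<exists>j\<in>J. B j \<subseteq> S)) + subset_prob p U (\<lambda>S. C S \<and> A \<subseteq> S)"
    using subset_prob_split[OF U, of p "\<lambda>S. A \<subseteq> S \<and> E S" "\<lambda>S. \<exists>j\<in>J. B j \<subseteq> S"] by simp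
  moreover have "subset_prob p U (\<lambda>S. (A \<subseteq> S \<and> E S) \<and> (\<exists>j\<in>J. B j \<subseteq> S)) \<le> \<sigma> * subset_prob p U E"
    unfolding \<sigma>_def using I A by (intro subset_prob_superset_overlap_le[OF U _ _ _ p E_antimono]) (auto simp: J_def)
  ultimately have key: "subset_prob p U E * (p ^ card A - \<sigma>) \<le> subset_prob p U (\<lambda>S. C S \<and> A \<subseteq> S)"
    using indep by (simp add: algebra_simps)
  have CE: "subset_prob p U C \<le> subset_prob p U E"
    by (rule subset_prob_mono[OF U p]) (auto simp: C_def E_def)
  have "subset_prob p U C * (p ^ card A - \<sigma>) \<le> subset_prob p U (\<lambda>S. C S \<and> A \<subseteq> S)"
  proof (cases "0 \<le> p ^ card A - \<sigma>")
    case True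
    then show ?thesis using key CE by (meson mult_right_mono order_trans)
  next
    case False
    then have "subset_prob p U C * (p ^ card A - \<sigma>) \<le> 0"
      using subset_prob_nonneg[OF p, of U C] False by (intro mult_nonneg_nonpos) auto
    then show ?thesis using subset_prob_nonneg[OF p] order_trans by blast
  qed
  then show ?thesis unfolding C_def J_def \<sigma>_def .
qed

lemma janson_inequality:
  assumes U: "finite U" and I: "finite I" and A: "\<And>i. i \<in> I \<Longrightarrow> A i \<subseteq> U" and p: "0 \<le> p" "p \<le> 1"
  shows "subset_prob p U (\<lambda>S. \<forall>i\<in>I. \<not> A i \<subseteq> S) \<le>
    exp (- (\<Sum>i\<in>I. p ^ card (A i)) +
         (\<Sum>i\<in>I. \<Sum>j\<in>{j\<in>I. j \<noteq> i \<and> A i \<inter> A j \<noteq> {}}. p ^ card (A i \<union> A j)))"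
  using I A
proof (induction I rule: finite_induct)
  case empty
  then show ?case using subset_prob_True[OF U] by simp
next
  case (insert i I)
  define C where "C = (\<lambda>S. \<forall>j\<in>I. \<not> A j \<subseteq> S)"
  define \<sigma> where "\<sigma> = (\<Sum>j\<in>{j\<in>I. A i \<inter> A j \<noteq> {}}. p ^ card (A i \<union> A j))"
  define \<Delta> where "\<Delta> = (\<lambda>I. \<Sum>k\<in>I. \<Sum>j\<in>{j\<in>I. j \<noteq> k \<and> A k \<inter> A j \<noteq> {}}. p ^ card (A k \<union> A j))"
  have "(\<lambda>S. C S \<and> \<not> A i \<subseteq> S) = (\<lambda>S. \<forall>j\<in>insert i I. \<not> A j \<subseteq> S)"
    by (auto simp: C_def)
  then have "subset_prob p U C =
      subset_prob p U (\<lambda>S. C S \<and> A i \<subseteq> S) + subset_prob p U (\<lambda>S. \<forall>j\<in>insert i I. \<not> A j \<subseteq> S)"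
    using subset_prob_split[OF U, of p C "\<lambda>S. A i \<subseteq> S"] by simp
  moreover have "subset_prob p U C * (p ^ card (A i) - \<sigma>) \<le> subset_prob p U (\<lambda>S. C S \<and> A i \<subseteq> S)"
    unfolding C_def \<sigma>_def using insert by (intro janson_step[OF U _ _ _ p]) auto
  ultimately have "subset_prob p U (\<lambda>S. \<forall>j\<in>insert i I. \<not> A j \<subseteq> S) \<le> subset_prob p U C * (1 + (\<sigma> - p ^ card (A i)))"
    by (simp add: algebra_simps)
  also have "\<dots> \<le> subset_prob p U C * exp (\<sigma> - p ^ card (A i))"
    using subset_prob_nonneg[OF p] by (intro mult_left_mono) auto
  also have "\<dots> \<le> exp (- (\<Sum>i\<in>I. p ^ card (A i)) + \<Delta> I) * exp (\<sigma> - p ^ card (A i))"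
    using insert unfolding C_def \<Delta>_def by (intro mult_right_mono) auto
  also have "\<dots> \<le> exp (- (\<Sum>i\<in>insert i I. p ^ card (A i)) + \<Delta> (insert i I))"
  proof -
    have "\<Delta> I \<le> (\<Sum>k\<in>I. \<Sum>j\<in>{j\<in>insert i I. j \<noteq> k \<and> A k \<inter> A j \<noteq> {}}. p ^ card (A k \<union> A j))"
      unfolding \<Delta>_def using insert p by (intro sum_mono sum_mono2) auto
    moreover have "{j\<in>insert i I. j \<noteq> i \<and> A i \<inter> A j \<noteq> {}} = {j\<in>I. A i \<inter> A j \<noteq> {}}"
      using insert by auto
    ultimately have "\<Delta> I + \<sigma> \<le> \<Delta> (insert i I)"
      using insert by (simp add: \<Delta>_def \<sigma>_def)
    then show ?thesis using insert by (simp flip: exp_add)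
  qed
  finally show ?case unfolding \<Delta>_def .
qed

lemma measure_Pi_bernoulli_eq_subset_prob:
  assumes A: "finite A" and p: "0 \<le> p" "p \<le> 1"
  shows "measure_pmf.prob (Pi_pmf A False (\<lambda>_. bernoulli_pmf p)) {f. P {x \<in> A. f x}} = subset_prob p A P"
proof -
  define M where "M = Pi_pmf A False (\<lambda>_. bernoulli_pmf p)"
  define F where "F = {f :: 'a \<Rightarrow> bool. \<forall>x. x \<notin> A \<longrightarrow> f x = False}"
  define E where "E = {f. P {x \<in> A. f x}}"
  define Ps where "Ps = {S. S \<subseteq> A \<and> P S}"
  have "set_pmf M \<subseteq> F" unfolding M_def F_def by (rule set_Pi_pmf_subset[OF A])
  then have "E \<inter> F \<inter> set_pmf M = E \<inter> set_pmf M" by auto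
  then have "measure_pmf.prob M E = measure_pmf.prob M (E \<inter> F)"
    by (metis measure_Int_set_pmf)
  also have EF: "E \<inter> F = (\<lambda>S x. x \<in> S) ` Ps"
  proof (intro equalityI subsetI)
    fix f assume "f \<in> E \<inter> F"
    then have "f = (\<lambda>x. x \<in> {x \<in> A. f x})" "{x \<in> A. f x} \<in> Ps"
      by (auto simp: E_def F_def Ps_def fun_eq_iff)
    then show "f \<in> (\<lambda>S x. x \<in> S) ` Ps" by blast
  next
    fix f assume "f \<in> (\<lambda>S x. x \<in> S) ` Ps"
    then obtain S where "S \<subseteq> A" "P S" "f = (\<lambda>x. x \<in> S)" by (auto simp: Ps_def)
    moreover have "{x \<in> A. x \<in> S} = S" using \<open>S \<subseteq> A\<close> by auto
    ultimately show "f \<in> E \<inter> F" by (auto simp: E_def F_def)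
  qed
  also have fin: "finite Ps" unfolding Ps_def using A by (auto intro: finite_subset[of _ "Pow A"])
  then have "measure_pmf.prob M ((\<lambda>S x. x \<in> S) ` Ps) = sum (pmf M) ((\<lambda>S x. x \<in> S) ` Ps)"
    by (intro measure_measure_pmf_finite finite_imageI)
  also have "\<dots> = (\<Sum>S\<in>Ps. pmf M (\<lambda>x. x \<in> S))"
    by (rule sum.reindex[unfolded comp_def]) (auto simp: inj_on_def fun_eq_iff)
  also have "\<dots> = subset_prob p A P"
    unfolding subset_prob_def Ps_def[symmetric]
  proof (rule sum.cong[OF refl])
    fix S assume "S \<in> Ps"
    then have "S \<subseteq> A" by (simp add: Ps_def)
    have "pmf M (\<lambda>x. x \<in> S) = (\<Prod>x\<in>A. if x \<in> S then p else 1 - p)"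
      unfolding M_def using \<open>S \<subseteq> A\<close> p by (subst pmf_Pi[OF A]) (auto intro!: prod.cong)
    also have "\<dots> = p ^ card (A \<inter> S) * (1 - p) ^ card (A - S)"
      using A by (simp add: prod.If_cases Diff_eq)
    finally show "pmf M (\<lambda>x. x \<in> S) = p ^ card S * (1 - p) ^ card (A - S)"
      using \<open>S \<subseteq> A\<close> by (simp add: Int_absorb1)
  qed
  finally show ?thesis by (simp add: M_def E_def)
qed

section \<open>Factorizations of a group element into words\<close>

definition mult_list :: "('a, 'b) monoid_scheme \<Rightarrow> 'a list \<Rightarrow> 'a" where
  "mult_list G xs = foldr (\<lambda>x y. x \<otimes>\<^bsub>G\<^esub> y) xs \<one>\<^bsub>G\<^esub>"

lemma mult_list_Nil [simp]: "mult_list G [] = \<one>\<^bsub>G\<^esub>"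
  by (simp add: mult_list_def)

lemma mult_list_Cons [simp]: "mult_list G (x # xs) = x \<otimes>\<^bsub>G\<^esub> mult_list G xs"
  by (simp add: mult_list_def)

lemma card_le_prod_card_nth:
  assumes determined: "\<And>xs ys. xs \<in> T \<Longrightarrow> ys \<in> T \<Longrightarrow> (\<forall>i\<in>K. xs ! i = ys ! i) \<Longrightarrow> xs = ys"
    and nth_in: "\<And>xs i. xs \<in> T \<Longrightarrow> i \<in> K \<Longrightarrow> xs ! i \<in> F i"
    and fin: "finite K" "\<And>i. i \<in> K \<Longrightarrow> finite (F i)"
  shows "card T \<le> (\<Prod>i\<in>K. card (F i))"
proof -
  have "card T \<le> card (\<Pi>\<^sub>E i\<in>K. F i)"
  proof (rule card_inj_on_le)
    show "inj_on (\<lambda>xs. \<lambda>i\<in>K. xs ! i) T"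
      by (rule inj_onI) (use determined in \<open>metis restrict_apply'\<close>)
    show "(\<lambda>xs. \<lambda>i\<in>K. xs ! i) ` T \<subseteq> (\<Pi>\<^sub>E i\<in>K. F i)" using nth_in by auto
    show "finite (\<Pi>\<^sub>E i\<in>K. F i)" using fin by (intro finite_PiE)
  qed
  then show ?thesis using fin(1) by (simp add: card_PiE)
qed

context group
begin

lemma mult_list_closed [simp]: "set xs \<subseteq> carrier G \<Longrightarrow> mult_list G xs \<in> carrier G"
  by (induction xs) auto

lemma mult_list_append:
  "set xs \<subseteq> carrier G \<Longrightarrow> set ys \<subseteq> carrier G \<Longrightarrow> mult_list G (xs @ ys) = mult_list G xs \<otimes> mult_list G ys"
  by (induction xs) (auto simp: m_assoc)

definition factorizations :: "nat \<Rightarrow> 'a \<Rightarrow> 'a list set" where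
  "factorizations d k = {xs. length xs = d \<and> set xs \<subseteq> carrier G \<and> mult_list G xs = k}"

lemma finite_factorizations: "finite (carrier G) \<Longrightarrow> finite (factorizations d k)"
  by (rule finite_subset[of _ "{xs. set xs \<subseteq> carrier G \<and> length xs = d}"])
     (auto simp: factorizations_def finite_lists_length_eq)

lemma factorizations_eq_if_nth_eq:
  assumes xs: "xs \<in> factorizations d k" and ys: "ys \<in> factorizations d k" and q: "q < d"
    and eq: "\<And>i. i < d \<Longrightarrow> i \<noteq> q \<Longrightarrow> xs ! i = ys ! i"
  shows "xs = ys"
proof -
  have len: "length xs = d" "length ys = d" and carr: "set xs \<subseteq> carrier G" "set ys \<subseteq> carrier G"
    using xs ys by (auto simp: factorizations_def)
  define pre where "pre = take q xs"
  define suf where "suf = drop (Suc q) xs"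
  have "take q ys = pre" "drop (Suc q) ys = suf"
    using eq len by (auto simp: pre_def suf_def intro!: nth_equalityI)
  then have decomp: "xs = pre @ xs ! q # suf" "ys = pre @ ys ! q # suf"
    using q len id_take_nth_drop[of q xs] id_take_nth_drop[of q ys] by (simp_all add: pre_def suf_def)
  have pre_suf: "set pre \<subseteq> carrier G" "set suf \<subseteq> carrier G"
    using carr by (auto simp: pre_def suf_def dest: in_set_takeD in_set_dropD)
  have "xs ! q \<in> carrier G" "ys ! q \<in> carrier G" using carr len q by auto
  moreover have "mult_list G (pre @ xs ! q # suf) = mult_list G (pre @ ys ! q # suf)"
    using xs ys decomp by (simp add: factorizations_def)
  ultimately have "xs ! q = ys ! q" using pre_suf by (simp add: mult_list_append)
  then show ?thesis using eq len by (metis nth_equalityI)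
qed

lemma card_factorizations:
  assumes fin: "finite (carrier G)" and "d \<ge> 1" "k \<in> carrier G"
  shows "card (factorizations d k) = card (carrier G) ^ (d - 1)"
proof (rule antisym)
  have "card (factorizations d k) \<le> (\<Prod>i\<in>{..<d - 1}. card (carrier G))"
  proof (rule card_le_prod_card_nth)
    show "xs = ys" if "xs \<in> factorizations d k" "ys \<in> factorizations d k" "\<forall>i\<in>{..<d - 1}. xs ! i = ys ! i" for xs ys
      using that assms by (intro factorizations_eq_if_nth_eq[of _ d k _ "d - 1"]) auto
  qed (use fin in \<open>auto simp: factorizations_def\<close>)
  then show "card (factorizations d k) \<le> card (carrier G) ^ (d - 1)" by simp
next
  \<comment> \<open>The last letter of a factorization is determined by the others.\<close>
  let ?complete = "\<lambda>ys. ys @ [inv (mult_list G ys) \<otimes> k]"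
  have "card (carrier G) ^ (d - 1) = card {ys. set ys \<subseteq> carrier G \<and> length ys = d - 1}"
    using fin by (simp add: card_lists_length_eq)
  also have "\<dots> \<le> card (factorizations d k)"
  proof (rule card_inj_on_le)
    show "inj_on ?complete {ys. set ys \<subseteq> carrier G \<and> length ys = d - 1}" by (auto simp: inj_on_def)
    show "?complete ` {ys. set ys \<subseteq> carrier G \<and> length ys = d - 1} \<subseteq> factorizations d k"
      using assms by (auto simp: factorizations_def mult_list_append m_assoc[symmetric])
    show "finite (factorizations d k)" using fin by (rule finite_factorizations)
  qed
  finally show "card (carrier G) ^ (d - 1) \<le> card (factorizations d k)" .
qed

lemma card_factorizations_nth_one:
  assumes fin: "finite (carrier G)" and "d \<ge> 2" "i < d"
  shows "card {xs \<in> factorizations d k. xs ! i = \<one>} \<le> card (carrier G) ^ (d - 2)"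
proof -
  define q where "q = (if i = 0 then 1 else (0::nat))"
  have q: "q < d" "q \<noteq> i" using assms by (auto simp: q_def)
  have "card {xs \<in> factorizations d k. xs ! i = \<one>} \<le> (\<Prod>l\<in>{..<d} - {q, i}. card (carrier G))"
  proof (rule card_le_prod_card_nth)
    show "xs = ys" if "xs \<in> {xs \<in> factorizations d k. xs ! i = \<one>}" "ys \<in> {xs \<in> factorizations d k. xs ! i = \<one>}"
      "\<forall>l\<in>{..<d} - {q, i}. xs ! l = ys ! l" for xs ys
      using that q by (intro factorizations_eq_if_nth_eq[of _ d k _ q]) auto
  qed (use fin in \<open>auto simp: factorizations_def\<close>)
  also have "\<dots> = card (carrier G) ^ (d - 2)" using q assms by (simp add: card_Diff_subset numeral_2_eq_2)
  finally show ?thesis .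
qed

lemma card_factorizations_nth_eq:
  assumes fin: "finite (carrier G)" and "d \<ge> 3" "i < j" "j < d"
  shows "card {xs \<in> factorizations d k. xs ! i = xs ! j} \<le> card (carrier G) ^ (d - 2)"
proof -
  define q where "q = (if i \<noteq> 0 then 0 else if j \<noteq> 1 then 1 else (2::nat))"
  have q: "q < d" "q \<noteq> i" "q \<noteq> j" using assms by (auto simp: q_def)
  have "card {xs \<in> factorizations d k. xs ! i = xs ! j} \<le> (\<Prod>l\<in>{..<d} - {q, j}. card (carrier G))"
  proof (rule card_le_prod_card_nth)
    show "xs = ys" if "xs \<in> {xs \<in> factorizations d k. xs ! i = xs ! j}" "ys \<in> {xs \<in> factorizations d k. xs ! i = xs ! j}"
      "\<forall>l\<in>{..<d} - {q, j}. xs ! l = ys ! l" for xs ys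
    proof (rule factorizations_eq_if_nth_eq[of xs d k ys q])
      have "xs ! j = ys ! j" using that q assms by force
      then show "xs ! l = ys ! l" if "l < d" "l \<noteq> q" for l using that \<open>\<forall>l\<in>_. xs ! l = ys ! l\<close> by auto
    qed (use that q in auto)
  qed (use fin in \<open>auto simp: factorizations_def\<close>)
  also have "\<dots> = card (carrier G) ^ (d - 2)" using q assms by (simp add: card_Diff_subset numeral_2_eq_2)
  finally show ?thesis .
qed

lemma card_factorizations_square:
  "card {xs \<in> factorizations 2 k. xs ! 0 = xs ! 1} = card {x \<in> carrier G. x \<otimes> x = k}"
proof -
  have "{xs \<in> factorizations 2 k. xs ! 0 = xs ! 1} = (\<lambda>x. [x, x]) ` {x \<in> carrier G. x \<otimes> x = k}"
    by (auto simp: factorizations_def numeral_2_eq_2 length_Suc_conv)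
  then show ?thesis by (simp add: card_image inj_on_def)
qed

lemma card_factorizations_nth_in:
  assumes fin: "finite (carrier G)" and P: "P \<subseteq> {..<d}" "card P < d" and "card A = d"
  shows "card {xs \<in> factorizations d k. \<forall>i\<in>P. xs ! i \<in> A} \<le> d ^ card P * card (carrier G) ^ (d - 1 - card P)"
proof -
  have "\<not> {..<d} \<subseteq> P"
  proof
    assume "{..<d} \<subseteq> P"
    then have "P = {..<d}" using P(1) by blast
    then show False using P(2) by simp
  qed
  then obtain q where q: "q < d" "q \<notin> P" by blast
  define F where "F = (\<lambda>i. if i \<in> P then A else carrier G)"
  have "card {xs \<in> factorizations d k. \<forall>i\<in>P. xs ! i \<in> A} \<le> (\<Prod>i\<in>{..<d} - {q}. card (F i))"
  proof (rule card_le_prod_card_nth)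
    show "xs = ys" if "xs \<in> {xs \<in> factorizations d k. \<forall>i\<in>P. xs ! i \<in> A}" "ys \<in> {xs \<in> factorizations d k. \<forall>i\<in>P. xs ! i \<in> A}"
      "\<forall>l\<in>{..<d} - {q}. xs ! l = ys ! l" for xs ys
      using that q by (intro factorizations_eq_if_nth_eq[of _ d k _ q]) auto
    show "finite (F i)" for i
      using fin \<open>card A = d\<close> q(1) by (auto simp: F_def card_ge_0_finite)
  qed (auto simp: factorizations_def F_def)
  also have "\<dots> = (\<Prod>i\<in>{..<d} - {q}. if i \<in> P then d else card (carrier G))"
    by (rule prod.cong) (auto simp: F_def \<open>card A = d\<close>)
  also have "\<dots> = d ^ card (({..<d} - {q}) \<inter> P) * card (carrier G) ^ card ({..<d} - {q} - P)"
    by (simp add: prod.If_cases Collect_mem_eq flip: Diff_eq)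
  also have "\<dots> = d ^ card P * card (carrier G) ^ (d - 1 - card P)"
  proof -
    have "({..<d} - {q}) \<inter> P = P" "card ({..<d} - {q} - P) = d - 1 - card P"
      using P q by (auto simp: card_Diff_subset finite_subset Diff_insert2[symmetric])
    then show ?thesis by simp
  qed
  finally show ?thesis .
qed

end

lemma card_nth_in_eq_card_Int_set:
  assumes "distinct xs"
  shows "card {i. i < length xs \<and> xs ! i \<in> A} = card (A \<inter> set xs)"
proof -
  have "bij_betw (nth xs) {i. i < length xs \<and> xs ! i \<in> A} (A \<inter> set xs)"
    using assms by (auto simp: bij_betw_def inj_on_def nth_eq_iff_index_eq in_set_conv_nth)
  then show ?thesis by (rule bij_betw_same_card)
qed

lemma card_Int_Un_of_card_eq:
  assumes "finite A" "finite B" "card A = d" "card B = d" "A \<noteq> B" "A \<inter> B \<noteq> {}"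
  shows "card (A \<inter> B) \<in> {1..<d} \<and> card (A \<union> B) = 2 * d - card (A \<inter> B)"
proof -
  have "card (A \<inter> B) \<noteq> d"
    using assms card_subset_eq[of A "A \<inter> B"] card_subset_eq[of B "A \<inter> B"] by auto
  moreover have "card (A \<inter> B) \<le> d" using assms card_mono[of A "A \<inter> B"] by auto
  moreover have "card (A \<inter> B) \<noteq> 0" using assms by auto
  moreover have "card (A \<union> B) + card (A \<inter> B) = d + d" using card_Un_Int[of A B] assms by simp
  ultimately show ?thesis by auto
qed

text \<open>Upper bound for the part of Janson's \<open>\<Delta>\<close> contributed by one simple factorization:
  \<open>j\<close> is the number of shared letters and \<open>x\<close> the order of the group.\<close>
definition overlap_bound :: "nat \<Rightarrow> real \<Rightarrow> real \<Rightarrow> real" where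
  "overlap_bound d x p = (\<Sum>j\<in>{1..<d}. real (d choose j) * real d ^ j * x ^ (d - 1 - j) * p ^ (2 * d - j))"

context group
begin

definition simple_factorizations :: "nat \<Rightarrow> 'a \<Rightarrow> 'a list set" where
  "simple_factorizations d k = {xs \<in> factorizations d k. distinct xs \<and> \<one> \<notin> set xs}"

lemma finite_simple_factorizations: "finite (carrier G) \<Longrightarrow> finite (simple_factorizations d k)"
  unfolding simple_factorizations_def using finite_factorizations by auto

lemma card_set_simple_factorization: "xs \<in> simple_factorizations d k \<Longrightarrow> card (set xs) = d"
  by (auto simp: simple_factorizations_def factorizations_def distinct_card)

lemma card_factorizations_le_simple:
  assumes fin: "finite (carrier G)" and d: "d \<ge> 2" and k: "k \<in> carrier G"
  shows "card (carrier G) ^ (d - 1) \<le> card (simple_factorizations d k) + d * card (carrier G) ^ (d - 2) +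
     (\<Sum>(i, j)\<in>{(i, j). i < j \<and> j < d}. card {xs \<in> factorizations d k. xs ! i = xs ! j})"
proof -
  define ones where "ones = (\<Union>i<d. {xs \<in> factorizations d k. xs ! i = \<one>})"
  define repeats where "repeats = (\<Union>(i, j)\<in>{(i, j). i < j \<and> j < d}. {xs \<in> factorizations d k. xs ! i = xs ! j})"
  have fin_pairs: "finite {(i, j). i < j \<and> j < (d::nat)}"
    by (rule finite_subset[of _ "{..<d} \<times> {..<d}"]) auto
  have "factorizations d k \<subseteq> simple_factorizations d k \<union> ones \<union> repeats"
  proof
    fix xs assume xs: "xs \<in> factorizations d k"
    then have len: "length xs = d" by (simp add: factorizations_def)
    consider "distinct xs \<and> \<one> \<notin> set xs" | "\<one> \<in> set xs" | "\<not> distinct xs" by blast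
    then show "xs \<in> simple_factorizations d k \<union> ones \<union> repeats"
    proof cases
      case 1
      then show ?thesis using xs by (simp add: simple_factorizations_def)
    next
      case 2
      then obtain i where "i < d" "xs ! i = \<one>" using len by (auto simp: in_set_conv_nth)
      then show ?thesis using xs by (auto simp: ones_def)
    next
      case 3
      then obtain i j where "i < j" "j < d" "xs ! i = xs ! j"
        using len by (metis distinct_conv_nth linorder_neqE_nat)
      then show ?thesis using xs by (auto simp: repeats_def)
    qed
  qed
  moreover have "finite (simple_factorizations d k \<union> ones \<union> repeats)"
    by (rule finite_subset[OF _ finite_factorizations[OF fin]])
       (auto simp: simple_factorizations_def ones_def repeats_def)
  ultimately have "card (factorizations d k) \<le> card (simple_factorizations d k \<union> ones \<union> repeats)"
    by (rule card_mono[rotated])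
  also have "\<dots> \<le> card (simple_factorizations d k) + card ones + card repeats"
    by (meson add_mono card_Un_le le_trans order_refl)
  finally have "card (factorizations d k) \<le> card (simple_factorizations d k) + card ones + card repeats" .
  moreover have "card ones \<le> d * card (carrier G) ^ (d - 2)"
  proof -
    have "card ones \<le> (\<Sum>i<d. card {xs \<in> factorizations d k. xs ! i = \<one>})"
      unfolding ones_def by (rule card_UN_le) simp
    also have "\<dots> \<le> (\<Sum>i<d. card (carrier G) ^ (d - 2))"
      by (rule sum_mono) (use card_factorizations_nth_one fin d in auto)
    finally show ?thesis by simp
  qed
  moreover have "card repeats \<le> (\<Sum>(i, j)\<in>{(i, j). i < j \<and> j < d}. card {xs \<in> factorizations d k. xs ! i = xs ! j})"
    unfolding repeats_def using card_UN_le[OF fin_pairs, of "\<lambda>(i, j). {xs \<in> factorizations d k. xs ! i = xs ! j}"]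
    by (simp add: case_prod_beta)
  ultimately show ?thesis using card_factorizations[OF fin _ k] d by simp
qed

lemma card_simple_factorizations_le:
  assumes "finite (carrier G)"
  shows "card (simple_factorizations d k) \<le> card (set ` simple_factorizations d k) * fact d"
proof -
  \<comment> \<open>At most \<open>d!\<close> simple factorizations share a letter set.\<close>
  have "simple_factorizations d k = (\<Union>A\<in>set ` simple_factorizations d k. {xs \<in> simple_factorizations d k. set xs = A})"
    by auto
  then have "card (simple_factorizations d k) \<le> (\<Sum>A\<in>set ` simple_factorizations d k. card {xs \<in> simple_factorizations d k. set xs = A})"
    using card_UN_le[of "set ` simple_factorizations d k" "\<lambda>A. {xs \<in> simple_factorizations d k. set xs = A}"]
      finite_simple_factorizations[OF assms] by simp
  also have "\<dots> \<le> (\<Sum>A\<in>set ` simple_factorizations d k. fact d)"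
  proof (rule sum_mono)
    fix A assume "A \<in> set ` simple_factorizations d k"
    then have "card A = d" "finite A" using card_set_simple_factorization by auto
    moreover have "{xs \<in> simple_factorizations d k. set xs = A} \<subseteq> permutations_of_set A"
      by (auto simp: permutations_of_set_def simple_factorizations_def)
    ultimately show "card {xs \<in> simple_factorizations d k. set xs = A} \<le> fact d"
      by (metis card_mono card_permutations_of_set finite_permutations_of_set)
  qed
  finally show ?thesis by simp
qed

lemma card_simple_factorizations_overlap:
  assumes fin: "finite (carrier G)" and xs: "xs \<in> simple_factorizations d k" and "j < d"
  shows "card {ys \<in> simple_factorizations d k. card (set xs \<inter> set ys) = j}
           \<le> (d choose j) * (d ^ j * card (carrier G) ^ (d - 1 - j))"
proof -
  define Ps where "Ps = {P. P \<subseteq> {..<d} \<and> card P = j}"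
  have fin_Ps: "finite Ps" unfolding Ps_def by (rule finite_subset[of _ "Pow {..<d}"]) auto
  \<comment> \<open>Classify \<open>ys\<close> by the set of positions where its letters lie in \<open>set xs\<close>.\<close>
  have "{ys \<in> simple_factorizations d k. card (set xs \<inter> set ys) = j}
          \<subseteq> (\<Union>P\<in>Ps. {ys \<in> factorizations d k. \<forall>i\<in>P. ys ! i \<in> set xs})"
  proof
    fix ys assume ys: "ys \<in> {ys \<in> simple_factorizations d k. card (set xs \<inter> set ys) = j}"
    then have "length ys = d" "distinct ys"
      by (auto simp: simple_factorizations_def factorizations_def)
    then have "{i. i < d \<and> ys ! i \<in> set xs} \<in> Ps"
      using ys card_nth_in_eq_card_Int_set[of ys "set xs"] by (auto simp: Ps_def)
    moreover have "ys \<in> factorizations d k" using ys by (simp add: simple_factorizations_def)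
    ultimately show "ys \<in> (\<Union>P\<in>Ps. {ys \<in> factorizations d k. \<forall>i\<in>P. ys ! i \<in> set xs})"
      by blast
  qed
  moreover have "finite (\<Union>P\<in>Ps. {ys \<in> factorizations d k. \<forall>i\<in>P. ys ! i \<in> set xs})"
    by (rule finite_subset[OF _ finite_factorizations[OF fin]]) auto
  ultimately have "card {ys \<in> simple_factorizations d k. card (set xs \<inter> set ys) = j}
      \<le> card (\<Union>P\<in>Ps. {ys \<in> factorizations d k. \<forall>i\<in>P. ys ! i \<in> set xs})"
    by (rule card_mono[rotated])
  also have "\<dots> \<le> (\<Sum>P\<in>Ps. card {ys \<in> factorizations d k. \<forall>i\<in>P. ys ! i \<in> set xs})"
    by (rule card_UN_le[OF fin_Ps])
  also have "\<dots> \<le> (\<Sum>P\<in>Ps. d ^ j * card (carrier G) ^ (d - 1 - j))"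
  proof (rule sum_mono)
    fix P assume "P \<in> Ps"
    then show "card {ys \<in> factorizations d k. \<forall>i\<in>P. ys ! i \<in> set xs} \<le> d ^ j * card (carrier G) ^ (d - 1 - j)"
      using card_factorizations_nth_in[OF fin, of P d "set xs" k] card_set_simple_factorization[OF xs] \<open>j < d\<close>
      by (auto simp: Ps_def)
  qed
  also have "\<dots> = (d choose j) * (d ^ j * card (carrier G) ^ (d - 1 - j))"
    using n_subsets[of "{..<d}" j] by (simp add: Ps_def)
  finally show ?thesis .
qed

lemma overlap_sum_le_overlap_bound:
  assumes fin: "finite (carrier G)" and xs: "xs \<in> simple_factorizations d k" and p: "0 \<le> p"
  shows "(\<Sum>B\<in>{B \<in> set ` simple_factorizations d k. B \<noteq> set xs \<and> set xs \<inter> B \<noteq> {}}. p ^ card (set xs \<union> B))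
           \<le> overlap_bound d (card (carrier G)) p"
proof -
  define Y where "Y = {ys \<in> simple_factorizations d k. set ys \<noteq> set xs \<and> set xs \<inter> set ys \<noteq> {}}"
  define c where "c = (\<lambda>ys. card (set xs \<inter> set ys))"
  have fin_Y: "finite Y" using finite_simple_factorizations[OF fin] by (simp add: Y_def)
  have c: "c ys \<in> {1..<d} \<and> card (set xs \<union> set ys) = 2 * d - c ys" if "ys \<in> Y" for ys
  proof -
    have "card (set ys) = d" "set xs \<noteq> set ys" "set xs \<inter> set ys \<noteq> {}"
      using that card_set_simple_factorization[of ys d k] by (auto simp: Y_def)
    then show ?thesis
      using card_Int_Un_of_card_eq[of "set xs" "set ys" d] card_set_simple_factorization[OF xs]
      by (simp add: c_def)
  qed
  have "(\<Sum>B\<in>{B \<in> set ` simple_factorizations d k. B \<noteq> set xs \<and> set xs \<inter> B \<noteq> {}}. p ^ card (set xs \<union> B))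
      = (\<Sum>B\<in>set ` Y. p ^ card (set xs \<union> B))"
    by (rule sum.cong) (auto simp: Y_def)
  also have "\<dots> \<le> (\<Sum>ys\<in>Y. p ^ card (set xs \<union> set ys))"
    using sum_image_le[OF fin_Y, of "\<lambda>B. p ^ card (set xs \<union> B)" set] p by (simp add: comp_def)
  also have "\<dots> = (\<Sum>ys\<in>Y. p ^ (2 * d - c ys))" by (rule sum.cong) (use c in auto)
  also have "\<dots> = (\<Sum>j\<in>c ` Y. \<Sum>ys\<in>{ys \<in> Y. c ys = j}. p ^ (2 * d - c ys))"
    by (rule sum.image_gen[OF fin_Y])
  also have "\<dots> = (\<Sum>j\<in>c ` Y. real (card {ys \<in> Y. c ys = j}) * p ^ (2 * d - j))"
    by (rule sum.cong) auto
  also have "\<dots> \<le> (\<Sum>j\<in>{1..<d}. real (card {ys \<in> Y. c ys = j}) * p ^ (2 * d - j))"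
    by (rule sum_mono2) (use c p in auto)
  also have "\<dots> \<le> overlap_bound d (card (carrier G)) p" unfolding overlap_bound_def
  proof (rule sum_mono)
    fix j assume j: "j \<in> {1..<d}"
    have "card {ys \<in> Y. c ys = j} \<le> card {ys \<in> simple_factorizations d k. card (set xs \<inter> set ys) = j}"
      by (rule card_mono) (use finite_simple_factorizations[OF fin] in \<open>auto simp: Y_def c_def\<close>)
    also have "\<dots> \<le> (d choose j) * (d ^ j * card (carrier G) ^ (d - 1 - j))"
      using card_simple_factorizations_overlap[OF fin xs] j by simp
    finally have "real (card {ys \<in> Y. c ys = j}) \<le> real (d choose j) * real d ^ j * real (card (carrier G)) ^ (d - 1 - j)"
      by (simp add: mult.assoc flip: of_nat_mult of_nat_power)
    then show "real (card {ys \<in> Y. c ys = j}) * p ^ (2 * d - j)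
        \<le> real (d choose j) * real d ^ j * real (card (carrier G)) ^ (d - 1 - j) * p ^ (2 * d - j)"
      using p by (intro mult_right_mono) auto
  qed
  finally show ?thesis .
qed

end

section \<open>Reaching a vertex in the random Cayley graph\<close>

definition cayley_reach :: "('a, 'b) monoid_scheme \<Rightarrow> 'a set \<Rightarrow> nat \<Rightarrow> 'a \<Rightarrow> bool" where
  "cayley_reach G S d k \<longleftrightarrow> (\<exists>n\<le>d. (cayley_adj G S ^^ n) \<one>\<^bsub>G\<^esub> k)"

lemma antimono_not_cayley_reach: "antimono (\<lambda>S. \<not> cayley_reach G S d k)"
proof (rule antimonoI)
  fix S S' :: "'a set" assume "S \<le> S'"
  then have "cayley_adj G S x y \<Longrightarrow> cayley_adj G S' x y" for x y by (auto simp: cayley_adj_def)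
  then have "(cayley_adj G S ^^ n) x y \<Longrightarrow> (cayley_adj G S' ^^ n) x y" for n x y
    by (rule relpowp_mono)
  then show "(\<not> cayley_reach G S' d k) \<le> (\<not> cayley_reach G S d k)"
    by (auto simp: cayley_reach_def)
qed

context group
begin

lemma relpowp_cayley_adj_mult_list:
  assumes "set xs \<subseteq> S" "set xs \<subseteq> carrier G" "\<one> \<notin> set xs" "a \<in> carrier G"
  shows "(cayley_adj G S ^^ length xs) a (a \<otimes> mult_list G xs)"
  using assms
proof (induction xs arbitrary: a)
  case Nil
  then show ?case by simp
next
  case (Cons x xs)
  have x: "x \<in> carrier G" "x \<in> S" "x \<noteq> \<one>" using Cons.prems by auto
  have "a \<otimes> x \<noteq> a" using x Cons.prems by (metis l_cancel_one')
  then have "cayley_adj G S a (a \<otimes> x)"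
    using x Cons.prems by (auto simp: cayley_adj_def m_assoc[symmetric])
  moreover have "(cayley_adj G S ^^ length xs) (a \<otimes> x) (a \<otimes> x \<otimes> mult_list G xs)"
    using Cons by auto
  ultimately have "(cayley_adj G S ^^ Suc (length xs)) a (a \<otimes> x \<otimes> mult_list G xs)"
    by (rule relpowp_Suc_I2)
  then show ?case using x Cons.prems by (simp add: m_assoc)
qed

lemma relpowp_cayley_adj_translate:
  assumes "(cayley_adj G S ^^ n) x y" "g \<in> carrier G"
  shows "(cayley_adj G S ^^ n) (g \<otimes> x) (g \<otimes> y)"
  using assms
proof (induction n arbitrary: x)
  case 0
  then show ?case by simp
next
  case (Suc n)
  obtain z where z: "cayley_adj G S x z" "(cayley_adj G S ^^ n) z y"
    using Suc.prems(1) by (blast dest: relpowp_Suc_D2)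
  have xz: "x \<in> carrier G" "z \<in> carrier G" "x \<noteq> z" using z(1) by (auto simp: cayley_adj_def)
  have "inv (g \<otimes> x) \<otimes> (g \<otimes> z) = inv x \<otimes> z" "inv (g \<otimes> z) \<otimes> (g \<otimes> x) = inv z \<otimes> x"
    using xz Suc.prems(2) by (simp_all add: inv_mult_group m_assoc[symmetric]) (simp_all add: m_assoc)
  then have "cayley_adj G S (g \<otimes> x) (g \<otimes> z)"
    using z(1) xz Suc.prems(2) by (auto simp: cayley_adj_def)
  then show ?case using Suc z by (blast intro: relpowp_Suc_I2)
qed

lemma cayley_diam_le:
  assumes "\<And>k. k \<in> carrier G \<Longrightarrow> k \<noteq> \<one> \<Longrightarrow> cayley_reach G S d k"
  shows "cayley_diam G S \<le> enat d"
  unfolding cayley_diam_def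
proof (intro SUP_least)
  fix g h assume g: "g \<in> carrier G" and h: "h \<in> carrier G"
  \<comment> \<open>By left translation, a walk from \<open>\<one>\<close> to \<open>inv g \<otimes> h\<close> gives one from \<open>g\<close> to \<open>h\<close>.\<close>
  obtain n where n: "n \<le> d" "(cayley_adj G S ^^ n) g h"
  proof (cases "inv g \<otimes> h = \<one>")
    case True
    then have "h = g" using g h by (metis inv_equality inv_inv inv_closed)
    then show ?thesis using that[of 0] by simp
  next
    case False
    then obtain n where "n \<le> d" "(cayley_adj G S ^^ n) \<one> (inv g \<otimes> h)"
      using assms[of "inv g \<otimes> h"] g h by (auto simp: cayley_reach_def)
    moreover have "(cayley_adj G S ^^ n) (g \<otimes> \<one>) (g \<otimes> (inv g \<otimes> h))"
      using relpowp_cayley_adj_translate[OF \<open>(cayley_adj G S ^^ n) \<one> _\<close> g] .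
    ultimately show ?thesis using that g h by (simp add: m_assoc[symmetric])
  qed
  then have "cayley_dist G S g h \<le> enat n"
    unfolding cayley_dist_def by (intro INF_lower2[of n]) auto
  then show "cayley_dist G S g h \<le> enat d" using n(1) by (meson enat_ord_simps(1) order_trans)
qed

lemma cayley_reach_if_simple_factorization:
  assumes "xs \<in> simple_factorizations d k" "set xs \<subseteq> S"
  shows "cayley_reach G S d k"
proof -
  have xs: "length xs = d" "set xs \<subseteq> carrier G" "\<one> \<notin> set xs" "mult_list G xs = k"
    using assms by (auto simp: simple_factorizations_def factorizations_def)
  then have "(cayley_adj G S ^^ d) \<one> k"
    using relpowp_cayley_adj_mult_list[OF assms(2) xs(2,3), of \<one>] mult_list_closed[OF xs(2)] by simp
  then show ?thesis by (auto simp: cayley_reach_def)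
qed

lemma cayley_reach_if_square:
  assumes "x \<in> carrier G" "x \<otimes> x = k" "k \<noteq> \<one>" "x \<in> S"
  shows "cayley_reach G S 2 k"
proof -
  have "x \<noteq> \<one>" using assms by auto
  then have "(cayley_adj G S ^^ length [x, x]) \<one> (\<one> \<otimes> mult_list G [x, x])"
    by (intro relpowp_cayley_adj_mult_list) (use assms in auto)
  then show ?thesis using assms unfolding cayley_reach_def by (intro exI[of _ 2]) (auto simp: numeral_2_eq_2)
qed

lemma prob_not_cayley_reach_le_janson:
  assumes fin: "finite (carrier G)" and p: "0 \<le> p" "p \<le> 1"
  shows "subset_prob p (carrier G) (\<lambda>S. \<not> cayley_reach G S d k) \<le>
    exp (- (card (simple_factorizations d k) / fact d * p ^ d) +
         card (simple_factorizations d k) * overlap_bound d (card (carrier G)) p)"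
proof -
  define \<A> where "\<A> = set ` simple_factorizations d k"
  have fin_\<A>: "finite \<A>" unfolding \<A>_def using finite_simple_factorizations[OF fin] by simp
  have \<A>_carrier: "A \<subseteq> carrier G" if "A \<in> \<A>" for A
    using that by (auto simp: \<A>_def simple_factorizations_def factorizations_def)
  have card_\<A>: "card A = d" if "A \<in> \<A>" for A
    using that by (auto simp: \<A>_def card_set_simple_factorization)
  have "subset_prob p (carrier G) (\<lambda>S. \<not> cayley_reach G S d k) \<le> subset_prob p (carrier G) (\<lambda>S. \<forall>A\<in>\<A>. \<not> id A \<subseteq> S)"
    by (rule subset_prob_mono[OF fin p]) (auto simp: \<A>_def dest: cayley_reach_if_simple_factorization)
  also have "\<dots> \<le> exp (- (\<Sum>A\<in>\<A>. p ^ card (id A)) +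
                        (\<Sum>A\<in>\<A>. \<Sum>B\<in>{B\<in>\<A>. B \<noteq> A \<and> id A \<inter> id B \<noteq> {}}. p ^ card (id A \<union> id B)))"
    using \<A>_carrier by (intro janson_inequality[OF fin fin_\<A> _ p]) simp
  also have "\<dots> \<le> exp (- (card (simple_factorizations d k) / fact d * p ^ d) +
                        card (simple_factorizations d k) * overlap_bound d (card (carrier G)) p)"
  proof -
    have "real (card (simple_factorizations d k)) \<le> real (card \<A> * fact d)"
      unfolding of_nat_le_iff \<A>_def by (rule card_simple_factorizations_le[OF fin])
    then have "card (simple_factorizations d k) / fact d \<le> real (card \<A>)"
      by (simp add: divide_le_eq)
    then have "card (simple_factorizations d k) / fact d * p ^ d \<le> real (card \<A>) * p ^ d"
      using p by (intro mult_right_mono) auto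
    also have "\<dots> = (\<Sum>A\<in>\<A>. p ^ card (id A))" using card_\<A> by simp
    finally have "card (simple_factorizations d k) / fact d * p ^ d \<le> (\<Sum>A\<in>\<A>. p ^ card (id A))" .
    moreover have "(\<Sum>A\<in>\<A>. \<Sum>B\<in>{B\<in>\<A>. B \<noteq> A \<and> id A \<inter> id B \<noteq> {}}. p ^ card (id A \<union> id B))
        \<le> (\<Sum>xs\<in>simple_factorizations d k. \<Sum>B\<in>{B\<in>\<A>. B \<noteq> set xs \<and> set xs \<inter> B \<noteq> {}}. p ^ card (set xs \<union> B))"
      unfolding \<A>_def id_apply using p
      by (intro sum_image_le[OF finite_simple_factorizations[OF fin], unfolded comp_def] sum_nonneg) auto
    moreover have "\<dots> \<le> (\<Sum>xs\<in>simple_factorizations d k. overlap_bound d (card (carrier G)) p)"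
      unfolding \<A>_def by (intro sum_mono overlap_sum_le_overlap_bound[OF fin _ p(1)])
    ultimately show ?thesis by simp
  qed
  finally show ?thesis .
qed

lemma prob_not_cayley_reach_le_square:
  assumes fin: "finite (carrier G)" and p: "0 \<le> p" "p \<le> 1" and "k \<noteq> \<one>"
  shows "subset_prob p (carrier G) (\<lambda>S. \<not> cayley_reach G S 2 k) \<le>
           exp (- (real (card {x \<in> carrier G. x \<otimes> x = k}) * p))"
proof -
  define R where "R = {x \<in> carrier G. x \<otimes> x = k}"
  have "subset_prob p (carrier G) (\<lambda>S. \<not> cayley_reach G S 2 k) \<le> subset_prob p (carrier G) (\<lambda>S. \<forall>x\<in>R. \<not> {x} \<subseteq> S)"
    by (rule subset_prob_mono[OF fin p]) (use \<open>k \<noteq> \<one>\<close> in \<open>auto simp: R_def dest: cayley_reach_if_square\<close>)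
  also have "\<dots> \<le> exp (- (\<Sum>x\<in>R. p ^ card {x}) + (\<Sum>x\<in>R. \<Sum>y\<in>{y\<in>R. y \<noteq> x \<and> {x} \<inter> {y} \<noteq> {}}. p ^ card ({x} \<union> {y})))"
    by (rule janson_inequality[OF fin _ _ p]) (use fin in \<open>auto simp: R_def\<close>)
  also have "\<dots> = exp (- (real (card R) * p))" by simp
  finally show ?thesis by (simp add: R_def)
qed

end

section \<open>Estimates\<close>

lemma binomial_partial_sum_le:
  fixes z :: real
  assumes "z \<ge> 0" "d \<ge> 1" "real d * z \<le> 1 / 2"
  shows "(\<Sum>j\<in>{1..<d}. real (d choose j) * z ^ j) \<le> 2 * real d * z"
proof -
  have "{..d} = insert 0 (insert d {1..<d})" using assms by auto
  then have expand: "(1 + z) ^ d = 1 + z ^ d + (\<Sum>j\<in>{1..<d}. real (d choose j) * z ^ j)"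
    using assms binomial_ring[of z 1 d] by (simp add: add.commute)
  have "(1 + z) ^ d \<le> exp z ^ d" using assms by (intro power_mono) auto
  also have "\<dots> = exp (d * z)" by (simp add: exp_of_nat_mult)
  also have "\<dots> \<le> 1 + 2 * (d * z)" using exp_bound_lemma[of "d * z"] assms by simp
  finally have "z ^ d + (\<Sum>j\<in>{1..<d}. real (d choose j) * z ^ j) \<le> 2 * (d * z)" using expand by simp
  moreover have "0 \<le> z ^ d" using assms by simp
  ultimately show ?thesis by (simp add: mult.assoc)
qed

lemma overlap_bound_eq:
  fixes x p :: real
  assumes "x > 0" "p > 0"
  shows "x ^ (d - 1) * overlap_bound d x p
           = (x ^ (d - 1) * p ^ d)\<^sup>2 * (\<Sum>j\<in>{1..<d}. real (d choose j) * (real d / (x * p)) ^ j)"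
  unfolding overlap_bound_def sum_distrib_left
proof (rule sum.cong[OF refl])
  fix j assume j: "j \<in> {1..<d}"
  have "x ^ (d - 1) * x ^ (d - 1 - j) * x ^ j = x ^ ((d - 1) + (d - 1 - j) + j)" by (simp add: power_add)
  also have "(d - 1) + (d - 1 - j) + j = (d - 1) + (d - 1)" using j by auto
  finally have x_pow: "x ^ (d - 1) * x ^ (d - 1 - j) * x ^ j = x ^ (d - 1) * x ^ (d - 1)" by (simp add: power_add)
  have "p ^ (2 * d - j) * p ^ j = p ^ ((2 * d - j) + j)" by (simp add: power_add)
  also have "(2 * d - j) + j = d + d" using j by auto
  finally have p_pow: "p ^ (2 * d - j) * p ^ j = p ^ d * p ^ d" by (simp add: power_add)
  have "(x ^ (d - 1) * p ^ d)\<^sup>2 = (x ^ (d - 1) * x ^ (d - 1)) * (p ^ d * p ^ d)"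
    by (simp add: power2_eq_square mult_ac)
  also have "\<dots> = (x ^ (d - 1) * x ^ (d - 1 - j) * x ^ j) * (p ^ (2 * d - j) * p ^ j)"
    by (simp only: x_pow p_pow)
  also have "\<dots> = x ^ (d - 1) * x ^ (d - 1 - j) * p ^ (2 * d - j) * (x * p) ^ j"
    by (simp add: power_mult_distrib mult_ac)
  finally have eq: "(x ^ (d - 1) * p ^ d)\<^sup>2 = x ^ (d - 1) * x ^ (d - 1 - j) * p ^ (2 * d - j) * (x * p) ^ j" .
  show "x ^ (d - 1) * (real (d choose j) * real d ^ j * x ^ (d - 1 - j) * p ^ (2 * d - j))
      = (x ^ (d - 1) * p ^ d)\<^sup>2 * (real (d choose j) * (real d / (x * p)) ^ j)"
    unfolding eq using assms by (simp add: power_divide)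
qed

lemma fact_mult_ge_one: "\<epsilon> \<ge> 0 \<Longrightarrow> 1 \<le> fact d * (1 + \<epsilon> :: real)"
  using mult_mono[OF fact_ge_1[of d] , of 1 "1 + \<epsilon>"] by simp

lemma overlap_bound_le:
  fixes x p \<epsilon> L :: real
  assumes x: "x > 0" and d: "d \<ge> 2" and \<epsilon>: "\<epsilon> > 0" and L: "L \<ge> 1"
    and p: "p > 0" "x ^ (d - 1) * p ^ d = fact d * (1 + \<epsilon>) * L"
    and xp: "16 * real d ^ 2 * (fact d * (1 + \<epsilon>))\<^sup>2 * L * (1 + 1 / \<epsilon>) \<le> x * p"
  shows "x ^ (d - 1) * overlap_bound d x p \<le> \<epsilon> * L / 4"
proof -
  define c where "c = fact d * (1 + \<epsilon>)"
  define w where "w = 1 + 1 / \<epsilon>"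
  define M where "M = 16 * real d ^ 2 * c\<^sup>2 * L * w"
  have c: "c \<ge> 1" using fact_mult_ge_one \<epsilon> by (simp add: c_def)
  have w: "w > 0" using \<epsilon> by (simp add: w_def add_pos_pos)
  have xp_pos: "x * p > 0" using x p by simp
  have "1 * 1 * 1 \<le> c\<^sup>2 * L * w"
    using c L \<epsilon> by (intro mult_mono) (auto simp: one_le_power w_def)
  then have "16 * real d ^ 2 * 1 \<le> 16 * real d ^ 2 * (c\<^sup>2 * L * w)"
    by (intro mult_left_mono) auto
  then have "2 * real d ^ 2 \<le> 16 * real d ^ 2 * (c\<^sup>2 * L * w)"
    using zero_le_power2[of "real d"] by linarith
  also have "\<dots> \<le> x * p" using xp by (simp add: c_def w_def mult_ac)
  finally have "d * (real d / (x * p)) \<le> 1 / 2"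
    using xp_pos by (simp add: field_simps power2_eq_square)
  then have "(\<Sum>j\<in>{1..<d}. real (d choose j) * (real d / (x * p)) ^ j) \<le> 2 * real d * (real d / (x * p))"
    using xp_pos d by (intro binomial_partial_sum_le) auto
  then have "(c * L)\<^sup>2 * (\<Sum>j\<in>{1..<d}. real (d choose j) * (real d / (x * p)) ^ j)
      \<le> (c * L)\<^sup>2 * (2 * real d * (real d / (x * p)))"
    by (rule mult_left_mono) simp
  moreover have "x ^ (d - 1) * overlap_bound d x p
      = (c * L)\<^sup>2 * (\<Sum>j\<in>{1..<d}. real (d choose j) * (real d / (x * p)) ^ j)"
    using overlap_bound_eq[OF x p(1)] p(2) by (simp add: c_def)
  ultimately have "x ^ (d - 1) * overlap_bound d x p \<le> (c * L)\<^sup>2 * (2 * real d * (real d / (x * p)))"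
    by simp
  also have "\<dots> = L / (8 * w) * (M / (x * p))"
    using w xp_pos by (simp add: M_def field_simps power2_eq_square)
  also have "\<dots> \<le> L / (8 * w)"
    using xp xp_pos L w by (intro mult_left_le) (auto simp: M_def c_def w_def)
  also have "\<dots> \<le> \<epsilon> * L / 4" using \<epsilon> L by (simp add: w_def field_simps)
  finally show ?thesis .
qed

lemma janson_exponent_le:
  fixes x p g B \<epsilon> L :: real
  assumes x: "x > 0" and d: "d \<ge> 2" and \<epsilon>: "\<epsilon> > 0" and L: "L \<ge> 1"
    and p: "p > 0" "p ^ d = fact d * (1 + \<epsilon>) * L / x ^ (d - 1)"
    and g: "x ^ (d - 1) - B \<le> g" "g \<le> x ^ (d - 1)" and B: "B \<le> \<epsilon> / (4 * (1 + \<epsilon>)) * x ^ (d - 1)"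
    and xp: "16 * real d ^ 2 * (fact d * (1 + \<epsilon>))\<^sup>2 * L * (1 + 1 / \<epsilon>) \<le> x * p"
  shows "- (g / fact d * p ^ d) + g * overlap_bound d x p \<le> - (1 + \<epsilon> / 2) * L"
proof -
  have xd: "x ^ (d - 1) > 0" using x by simp
  then have "x ^ (d - 1) * p ^ d = fact d * (1 + \<epsilon>) * L" using p(2) x by simp
  then have "x ^ (d - 1) * overlap_bound d x p \<le> \<epsilon> * L / 4"
    by (rule overlap_bound_le[OF x d \<epsilon> L p(1) _ xp])
  moreover have "overlap_bound d x p \<ge> 0" unfolding overlap_bound_def using x p by (intro sum_nonneg) auto
  ultimately have overlap: "g * overlap_bound d x p \<le> \<epsilon> * L / 4"
    using g(2) by (meson mult_right_mono order_trans)
  have "1 - B / x ^ (d - 1) = (x ^ (d - 1) - B) / x ^ (d - 1)" using xd x by (simp add: diff_divide_distrib)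
  also have "\<dots> \<le> g / x ^ (d - 1)" using g(1) xd by (intro divide_right_mono) auto
  finally have "(1 - B / x ^ (d - 1)) * ((1 + \<epsilon>) * L) \<le> g / x ^ (d - 1) * ((1 + \<epsilon>) * L)"
    using \<epsilon> L by (intro mult_right_mono) auto
  also have "\<dots> = g / fact d * p ^ d" using p(2) by simp
  finally have "(1 + \<epsilon>) * L - B / x ^ (d - 1) * ((1 + \<epsilon>) * L) \<le> g / fact d * p ^ d"
    by (simp add: algebra_simps)
  moreover have "B / x ^ (d - 1) * ((1 + \<epsilon>) * L) \<le> \<epsilon> / (4 * (1 + \<epsilon>)) * ((1 + \<epsilon>) * L)"
    using B xd \<epsilon> L by (intro mult_right_mono) (auto simp: divide_le_eq)
  moreover have "\<epsilon> / (4 * (1 + \<epsilon>)) * ((1 + \<epsilon>) * L) = \<epsilon> * L / 4"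
    using \<epsilon> by (simp add: field_simps add_pos_pos)
  moreover have "(1 + \<epsilon>) * L = L + \<epsilon> * L" "(1 + \<epsilon> / 2) * L = L + \<epsilon> * L / 2"
    by (simp_all add: algebra_simps)
  ultimately show ?thesis using overlap by linarith
qed

text \<open>The constraint \<open>d\<^sup>2 \<le> L / (2 ln L)\<close> on \<open>d\<close> is what makes \<open>x p\<close> exceed the polylogarithmic
  quantity required above; this is where the bound \<open>d\<^sub>N\<close> comes from.\<close>
lemma ln_threshold_le:
  fixes \<epsilon> L :: real
  assumes \<epsilon>: "\<epsilon> > 0" and L: "L > 0" "ln L \<ge> 1" and d: "d \<ge> 2" and dL: "real d ^ 2 \<le> L / (2 * ln L)"
    and large: "sqrt L * (ln 16 + ln (1 + 1 / \<epsilon>) + 2 * ln (1 + \<epsilon>) + 2 * ln L) \<le> L / 2"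
  shows "d * ln (16 * real d ^ 2 * (fact d * (1 + \<epsilon>))\<^sup>2 * L * (1 + 1 / \<epsilon>)) \<le> L"
proof -
  define K where "K = ln 16 + ln (1 + 1 / \<epsilon>) + 2 * ln (1 + \<epsilon>)"
  have d_pos: "real d > 0" using d by simp
  have "ln L > 0" using L by linarith
  then have d_ln_L: "real d ^ 2 * ln L \<le> L / 2" using dL by (simp add: le_divide_eq mult.commute)
  have "real d ^ 2 \<le> real d ^ 2 * ln L" using L by (simp add: mult_le_cancel_left1)
  then have d_sq: "real d ^ 2 \<le> L" using d_ln_L L by linarith
  then have d_sqrt: "real d \<le> sqrt L" by (metis of_nat_0_le_iff real_le_rsqrt)
  have "ln (real d ^ 2) \<le> ln L" using d_sq d_pos L by (subst ln_le_cancel_iff) auto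
  then have ln_d: "2 * ln (real d) \<le> ln L" using d_pos by (simp add: ln_realpow)
  have "ln (fact d) \<le> ln (real d ^ d)"
    using fact_le_power[of d, where 'a=real] d_pos by (subst ln_le_cancel_iff) auto
  then have ln_fact: "ln (fact d) \<le> real d * ln (real d)" using d_pos by (simp add: ln_realpow)
  have K: "K \<ge> 0" using \<epsilon> by (simp add: K_def)
  have inv_pos: "1 + 1 / \<epsilon> > 0" using \<epsilon> by (simp add: add_pos_pos)
  have "ln (16 * real d ^ 2 * (fact d * (1 + \<epsilon>))\<^sup>2 * L * (1 + 1 / \<epsilon>))
      = ln 16 + ln (real d ^ 2) + ln ((fact d * (1 + \<epsilon>))\<^sup>2) + ln L + ln (1 + 1 / \<epsilon>)"
    using d_pos \<epsilon> L inv_pos by (simp add: ln_mult)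
  also have "\<dots> = ln 16 + 2 * ln (real d) + 2 * (ln (fact d) + ln (1 + \<epsilon>)) + ln L + ln (1 + 1 / \<epsilon>)"
    using d_pos \<epsilon> by (simp add: ln_realpow ln_mult)
  also have "\<dots> \<le> K + 2 * ln (real d) + 2 * real d * ln (real d) + ln L"
    using ln_fact by (simp add: K_def)
  finally have "d * ln (16 * real d ^ 2 * (fact d * (1 + \<epsilon>))\<^sup>2 * L * (1 + 1 / \<epsilon>))
      \<le> real d * (K + 2 * ln (real d) + 2 * real d * ln (real d) + ln L)"
    by (rule mult_left_mono) simp
  also have "\<dots> = real d * (K + 2 * ln (real d) + ln L) + real d ^ 2 * (2 * ln (real d))"
    by (simp add: algebra_simps power2_eq_square)
  also have "\<dots> \<le> sqrt L * (K + 2 * ln L) + real d ^ 2 * ln L"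
  proof (rule add_mono)
    have "0 \<le> ln (real d)" using d by simp
    then show "real d * (K + 2 * ln (real d) + ln L) \<le> sqrt L * (K + 2 * ln L)"
      using d_sqrt K ln_d L by (intro mult_mono) auto
    show "real d ^ 2 * (2 * ln (real d)) \<le> real d ^ 2 * ln L"
      using ln_d by (intro mult_left_mono) auto
  qed
  also have "\<dots> \<le> L" using large d_ln_L by (simp add: K_def)
  finally show ?thesis .
qed

lemma threshold_le_mult:
  fixes \<epsilon> L x p :: real
  assumes x: "x > 0" "L = ln x" and \<epsilon>: "\<epsilon> > 0" and L: "L > 0" "ln L \<ge> 1" and d: "d \<ge> 2"
    and dL: "real d ^ 2 \<le> L / (2 * ln L)"
    and large: "sqrt L * (ln 16 + ln (1 + 1 / \<epsilon>) + 2 * ln (1 + \<epsilon>) + 2 * ln L) \<le> L / 2"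
    and p: "p \<ge> 0" "p ^ d = fact d * (1 + \<epsilon>) * L / x ^ (d - 1)"
  shows "16 * real d ^ 2 * (fact d * (1 + \<epsilon>))\<^sup>2 * L * (1 + 1 / \<epsilon>) \<le> x * p"
proof -
  define c where "c = fact d * (1 + \<epsilon>)"
  define M where "M = 16 * real d ^ 2 * c\<^sup>2 * L * (1 + 1 / \<epsilon>)"
  have c: "c \<ge> 1" using fact_mult_ge_one \<epsilon> by (simp add: c_def)
  have L_ge: "L \<ge> 1" by (rule ln_ge_zero_imp_ge_one) (use L in linarith)+
  have M_pos: "M > 0" unfolding M_def using d \<epsilon> L c by (intro mult_pos_pos add_pos_pos) auto
  have "M ^ d = exp (d * ln M)" using M_pos by (simp add: exp_of_nat_mult)
  also have "\<dots> \<le> exp L" unfolding M_def c_def using ln_threshold_le[OF \<epsilon> L d dL large] by simp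
  also have "\<dots> = x" using x by simp
  also have "\<dots> \<le> x * (c * L)"
    using x c L_ge mult_mono[of 1 c 1 L] by simp
  also have "\<dots> = (x * p) ^ d"
  proof -
    have "x ^ d = x * x ^ (d - 1)" using d by (cases d) auto
    then show ?thesis using p(2) x by (simp add: c_def power_mult_distrib field_simps)
  qed
  finally have "M ^ Suc (d - 1) \<le> (x * p) ^ Suc (d - 1)" using d by simp
  then have "M \<le> x * p" using x p by (intro power_le_imp_le_base[of M "d - 1"]) auto
  then show ?thesis by (simp add: M_def c_def)
qed

lemma square_count_mult_ge:
  fixes r x p \<epsilon> L \<beta> :: real
  assumes r: "r \<ge> \<beta> * x - 2" and large: "\<beta> * x \<ge> 4" "4 * (1 + \<epsilon> / 2)\<^sup>2 * L \<le> \<beta>\<^sup>2 * x"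
    and L: "L > 0" and x: "x > 0" and \<epsilon>: "\<epsilon> > 0" and p: "p \<ge> 0" "p\<^sup>2 = 2 * (1 + \<epsilon>) * L / x"
  shows "(1 + \<epsilon> / 2) * L \<le> r * p"
proof -
  have r2: "r \<ge> \<beta> * x / 2" using r large by linarith
  have "4 * (1 + \<epsilon> / 2)\<^sup>2 * L * L / 2 = 2 * ((1 + \<epsilon> / 2) * L)\<^sup>2"
    by (simp add: power2_eq_square)
  then have "((1 + \<epsilon> / 2) * L)\<^sup>2 \<le> 4 * (1 + \<epsilon> / 2)\<^sup>2 * L * L / 2"
    using zero_le_power2[of "(1 + \<epsilon> / 2) * L"] by linarith
  also have "\<dots> \<le> \<beta>\<^sup>2 * x * L / 2" using large(2) L by (intro divide_right_mono mult_right_mono) auto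
  also have "\<dots> = (\<beta> * x / 2)\<^sup>2 * (2 * L / x)" using x by (simp add: field_simps power2_eq_square)
  also have "\<dots> \<le> r\<^sup>2 * p\<^sup>2"
  proof (rule mult_mono)
    have "2 * L \<le> 2 * (1 + \<epsilon>) * L" using L \<epsilon> by simp
    then show "2 * L / x \<le> p\<^sup>2" unfolding p(2) by (rule divide_right_mono) (use x in simp)
    show "(\<beta> * x / 2)\<^sup>2 \<le> r\<^sup>2" by (rule power_mono[OF r2]) (use large in auto)
  qed (use L x in auto)
  also have "\<dots> = (r * p)\<^sup>2" by (simp add: power_mult_distrib)
  finally have "((1 + \<epsilon> / 2) * L)\<^sup>2 \<le> (r * p)\<^sup>2" .
  moreover have "0 \<le> r * p" using r2 large p by simp
  ultimately show ?thesis by (rule power2_le_imp_le)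
qed

section \<open>The diameter bound\<close>

definition order_large_for :: "real \<Rightarrow> nat \<Rightarrow> bool" where
  "order_large_for \<epsilon> N \<longleftrightarrow>
     (let L = ln (real N); \<beta> = \<epsilon> / (4 * (1 + \<epsilon>)) in
        0 < L \<and> 1 \<le> ln L \<and>
        sqrt L * (ln 16 + ln (1 + 1 / \<epsilon>) + 2 * ln (1 + \<epsilon>) + 2 * ln L) \<le> L / 2 \<and>
        2 * L \<le> \<beta> * N \<and> 4 \<le> \<beta> * N \<and> 4 * (1 + \<epsilon> / 2)\<^sup>2 * L \<le> \<beta>\<^sup>2 * N)"

lemma eventually_order_large_for:
  assumes "\<epsilon> > 0"
  shows "eventually (order_large_for \<epsilon>) sequentially"
proof -
  define K where "K = ln 16 + ln (1 + 1 / \<epsilon>) + 2 * ln (1 + \<epsilon>)"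
  define \<beta> where "\<beta> = \<epsilon> / (4 * (1 + \<epsilon>))"
  have "\<beta> > 0" using assms by (simp add: \<beta>_def)
  then have "\<forall>\<^sub>F x in at_top. 0 < ln x \<and> 1 \<le> ln (ln x) \<and> sqrt (ln x) * (K + 2 * ln (ln x)) \<le> ln x / 2 \<and>
      2 * ln x \<le> \<beta> * x \<and> 4 \<le> \<beta> * x \<and> 4 * (1 + \<epsilon> / 2)\<^sup>2 * ln x \<le> \<beta>\<^sup>2 * (x :: real)"
    by (intro eventually_conj; real_asymp)
  from eventually_compose_filterlim[OF this[unfolded K_def \<beta>_def] filterlim_real_sequentially]
  show ?thesis unfolding order_large_for_def Let_def .
qed

context group
begin

lemma prob_not_cayley_reach_le_if_many_simple:
  fixes \<epsilon> p B L :: real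
  assumes N_def: "N = card (carrier G)" and L_def: "L = ln (real N)"
    and fin: "finite (carrier G)" and large: "order_large_for \<epsilon> N" and \<epsilon>: "\<epsilon> > 0"
    and d: "2 \<le> d" "real d ^ 2 \<le> L / (2 * ln L)" and k: "k \<in> carrier G"
    and p: "0 < p" "p \<le> 1" "p ^ d = fact d * (1 + \<epsilon>) * L / real N ^ (d - 1)"
    and many: "real N ^ (d - 1) - B \<le> card (simple_factorizations d k)" "B \<le> \<epsilon> / (4 * (1 + \<epsilon>)) * real N ^ (d - 1)"
  shows "subset_prob p (carrier G) (\<lambda>S. \<not> cayley_reach G S d k) \<le> exp (- (1 + \<epsilon> / 2) * L)"
proof -
  have L: "0 < L" "1 \<le> ln L" and
    sqrt_L: "sqrt L * (ln 16 + ln (1 + 1 / \<epsilon>) + 2 * ln (1 + \<epsilon>) + 2 * ln L) \<le> L / 2"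
    using large by (simp_all add: order_large_for_def L_def N_def Let_def)
  have "N \<noteq> 0" by (rule ccontr) (use L(1) in \<open>simp add: L_def\<close>)
  then have N: "real N > 0" by simp
  have "card (simple_factorizations d k) \<le> card (factorizations d k)"
    by (rule card_mono) (auto simp: finite_factorizations fin simple_factorizations_def)
  then have "real (card (simple_factorizations d k)) \<le> real N ^ (d - 1)"
    using card_factorizations[OF fin _ k, of d] d by (simp add: N_def flip: of_nat_power)
  moreover have "16 * real d ^ 2 * (fact d * (1 + \<epsilon>))\<^sup>2 * L * (1 + 1 / \<epsilon>) \<le> N * p"
    using p by (intro threshold_le_mult[OF N L_def \<epsilon> L d(1,2) sqrt_L]) auto
  moreover have "L \<ge> 1" by (rule ln_ge_zero_imp_ge_one) (use L in linarith)+
  ultimately have "- (card (simple_factorizations d k) / fact d * p ^ d) +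
      card (simple_factorizations d k) * overlap_bound d N p \<le> - (1 + \<epsilon> / 2) * L"
    using many by (intro janson_exponent_le[OF N d(1) \<epsilon> _ p(1,3)]) auto
  moreover have "subset_prob p (carrier G) (\<lambda>S. \<not> cayley_reach G S d k) \<le>
      exp (- (card (simple_factorizations d k) / fact d * p ^ d) +
           card (simple_factorizations d k) * overlap_bound d N p)"
    using prob_not_cayley_reach_le_janson[OF fin, of p d k] p by (simp add: N_def)
  ultimately show ?thesis by (meson exp_le_cancel_iff order_trans)
qed

lemma card_simple_factorizations_ge:
  assumes fin: "finite (carrier G)" and d: "d \<ge> 3" and k: "k \<in> carrier G"
  shows "card (carrier G) ^ (d - 1) \<le> card (simple_factorizations d k) + (d + d * d) * card (carrier G) ^ (d - 2)"
proof -
  have "(\<Sum>(i, j)\<in>{(i, j). i < j \<and> j < d}. card {xs \<in> factorizations d k. xs ! i = xs ! j})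
      \<le> (\<Sum>(i, j)\<in>{(i, j). i < j \<and> j < d}. card (carrier G) ^ (d - 2))"
    by (rule sum_mono) (use card_factorizations_nth_eq[OF fin d] in auto)
  also have "\<dots> \<le> (d * d) * card (carrier G) ^ (d - 2)"
  proof -
    have "card {(i, j). i < j \<and> j < d} \<le> card ({..<d} \<times> {..<d})" by (rule card_mono) auto
    then show ?thesis by (simp add: card_cartesian_product)
  qed
  finally show ?thesis using card_factorizations_le_simple[OF fin _ k, of d] d by (simp add: algebra_simps)
qed

lemma card_simple_factorizations_two_ge:
  assumes "finite (carrier G)" "k \<in> carrier G"
  shows "card (carrier G) \<le> card (simple_factorizations 2 k) + 2 + card {x \<in> carrier G. x \<otimes> x = k}"
proof -
  have "{(i, j). i < j \<and> j < (2::nat)} = {(0, 1)}" by auto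
  then show ?thesis
    using card_factorizations_le_simple[OF assms(1) _ assms(2), of 2] card_factorizations_square[of k] by simp
qed

lemma prob_not_cayley_reach_le_of_ge_3:
  fixes \<epsilon> p L :: real
  assumes N_def: "N = card (carrier G)" and L_def: "L = ln (real N)"
    and fin: "finite (carrier G)" and large: "order_large_for \<epsilon> N" and \<epsilon>: "\<epsilon> > 0"
    and d: "3 \<le> d" "real d ^ 2 \<le> L / (2 * ln L)" and k: "k \<in> carrier G"
    and p: "0 < p" "p \<le> 1" "p ^ d = fact d * (1 + \<epsilon>) * L / real N ^ (d - 1)"
  shows "subset_prob p (carrier G) (\<lambda>S. \<not> cayley_reach G S d k) \<le> exp (- (1 + \<epsilon> / 2) * L)"
proof (rule prob_not_cayley_reach_le_if_many_simple[OF N_def L_def fin large \<epsilon> _ d(2) k p])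
  define \<beta> where "\<beta> = \<epsilon> / (4 * (1 + \<epsilon>))"
  have L: "0 < L" "1 \<le> ln L" and large': "2 * L \<le> \<beta> * N"
    using large by (simp_all add: order_large_for_def L_def N_def Let_def \<beta>_def)
  \<comment> \<open>Few factorizations repeat a letter or use \<open>\<one>\<close>, since \<open>d\<^sup>2 \<le> L\<close> is tiny compared with \<open>N\<close>.\<close>
  have "1 < L" by (rule ln_gt_zero_imp_gt_one) (use L in linarith)+
  then have "L / (2 * ln L) \<le> L / 2" using L by (intro divide_left_mono) auto
  then have "real d ^ 2 \<le> L" using d(2) L by linarith
  moreover have "d + d * d \<le> 2 * d ^ 2" using le_square[of d] by (simp add: power2_eq_square)
  then have "real (d + d * d) \<le> real (2 * d ^ 2)" by (simp only: of_nat_le_iff)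
  ultimately have "real (d + d * d) \<le> \<beta> * N" using large' by simp
  then have "real (d + d * d) * N ^ (d - 2) \<le> \<beta> * N * N ^ (d - 2)"
    by (rule mult_right_mono) simp
  also have "\<dots> = \<beta> * real N ^ (d - 1)"
  proof -
    have "d - 1 = Suc (d - 2)" using d(1) by simp
    then show ?thesis by simp
  qed
  finally show "real (d + d * d) * N ^ (d - 2) \<le> \<epsilon> / (4 * (1 + \<epsilon>)) * real N ^ (d - 1)"
    by (simp add: \<beta>_def)
  have "real (N ^ (d - 1)) \<le> real (card (simple_factorizations d k) + (d + d * d) * N ^ (d - 2))"
    using card_simple_factorizations_ge[OF fin d(1) k] unfolding N_def by (simp only: of_nat_le_iff)
  then show "real N ^ (d - 1) - real (d + d * d) * N ^ (d - 2) \<le> card (simple_factorizations d k)"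
    by simp
qed (use d in simp)

lemma prob_not_cayley_reach_le_of_eq_2:
  fixes \<epsilon> p L :: real
  assumes N_def: "N = card (carrier G)" and L_def: "L = ln (real N)"
    and fin: "finite (carrier G)" and large: "order_large_for \<epsilon> N" and \<epsilon>: "\<epsilon> > 0"
    and d: "4 \<le> L / (2 * ln L)" and k: "k \<in> carrier G" "k \<noteq> \<one>"
    and p: "0 < p" "p \<le> 1" "p\<^sup>2 = 2 * (1 + \<epsilon>) * L / N"
  shows "subset_prob p (carrier G) (\<lambda>S. \<not> cayley_reach G S 2 k) \<le> exp (- (1 + \<epsilon> / 2) * L)"
proof -
  define \<beta> where "\<beta> = \<epsilon> / (4 * (1 + \<epsilon>))"
  define r where "r = card {x \<in> carrier G. x \<otimes> x = k}"
  have L: "0 < L" and large': "4 \<le> \<beta> * N" "4 * (1 + \<epsilon> / 2)\<^sup>2 * L \<le> \<beta>\<^sup>2 * N"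
    using large by (simp_all add: order_large_for_def L_def N_def Let_def \<beta>_def)
  have "N \<noteq> 0" by (rule ccontr) (use L in \<open>simp add: L_def\<close>)
  show ?thesis
  proof (cases "real (2 + r) \<le> \<beta> * N")
    case True
    have "real N \<le> real (card (simple_factorizations 2 k) + 2 + r)"
      using card_simple_factorizations_two_ge[OF fin k(1)] unfolding N_def r_def by (simp only: of_nat_le_iff)
    then show ?thesis
      using True p d by (intro prob_not_cayley_reach_le_if_many_simple[OF N_def L_def fin large \<epsilon> _ _ k(1),
          where B = "real (2 + r)"]) (auto simp: \<beta>_def)
  next
    \<comment> \<open>Otherwise \<open>k\<close> has so many square roots that one of them lies in \<open>S\<close>.\<close>
    case False
    have "(1 + \<epsilon> / 2) * L \<le> r * p"
      using False large' L \<open>N \<noteq> 0\<close> \<epsilon> p by (intro square_count_mult_ge[where \<beta>=\<beta>]) auto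
    then have "exp (- (real r * p)) \<le> exp (- (1 + \<epsilon> / 2) * L)" by (simp add: algebra_simps)
    moreover have "subset_prob p (carrier G) (\<lambda>S. \<not> cayley_reach G S 2 k) \<le> exp (- (real r * p))"
      using prob_not_cayley_reach_le_square[OF fin _ p(2) k(2)] p(1) by (simp add: r_def)
    ultimately show ?thesis by (rule order_trans[rotated])
  qed
qed

lemma prob_not_cayley_reach_le:
  fixes \<epsilon> p L :: real
  assumes N_def: "N = card (carrier G)" and L_def: "L = ln (real N)"
    and fin: "finite (carrier G)" and large: "order_large_for \<epsilon> N" and \<epsilon>: "\<epsilon> > 0"
    and d: "2 \<le> d" "real d ^ 2 \<le> L / (2 * ln L)" and k: "k \<in> carrier G" "k \<noteq> \<one>"
    and p: "0 < p" "p \<le> 1" "p ^ d = fact d * (1 + \<epsilon>) * L / real N ^ (d - 1)"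
  shows "subset_prob p (carrier G) (\<lambda>S. \<not> cayley_reach G S d k) \<le> exp (- (1 + \<epsilon> / 2) * L)"
proof (cases "d = 2")
  case True
  then have "4 \<le> L / (2 * ln L)" "p\<^sup>2 = 2 * (1 + \<epsilon>) * L / N" using d(2) p(3) by simp_all
  then show ?thesis using True prob_not_cayley_reach_le_of_eq_2[OF N_def L_def fin large \<epsilon> _ k p(1,2)] by simp
next
  case False
  then show ?thesis
    using d p by (intro prob_not_cayley_reach_le_of_ge_3[OF N_def L_def fin large \<epsilon> _ _ k(1)]) auto
qed

lemma prob_cayley_diam_gt_le:
  fixes \<epsilon> p p' L :: real
  assumes N_def: "N = card (carrier G)" and L_def: "L = ln (real N)"
    and fin: "finite (carrier G)" and large: "order_large_for \<epsilon> N" and \<epsilon>: "\<epsilon> > 0"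
    and d: "2 \<le> d" "real d ^ 2 \<le> L / (2 * ln L)"
    and p: "0 < p" "p \<le> p'" "p' \<le> 1" "p ^ d = fact d * (1 + \<epsilon>) * L / real N ^ (d - 1)"
  shows "subset_prob p' (carrier G) (\<lambda>S. enat d < cayley_diam G S) \<le> N * exp (- (1 + \<epsilon> / 2) * L)"
proof -
  have "subset_prob p' (carrier G) (\<lambda>S. enat d < cayley_diam G S)
      \<le> subset_prob p' (carrier G) (\<lambda>S. True \<and> (\<exists>k\<in>carrier G - {\<one>}. \<not> cayley_reach G S d k))"
  proof (rule subset_prob_mono[OF fin])
    fix S assume "enat d < cayley_diam G S"
    then show "True \<and> (\<exists>k\<in>carrier G - {\<one>}. \<not> cayley_reach G S d k)"
      using cayley_diam_le[of S d] by force
  qed (use p in auto)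
  also have "\<dots> \<le> (\<Sum>k\<in>carrier G - {\<one>}. subset_prob p' (carrier G) (\<lambda>S. True \<and> \<not> cayley_reach G S d k))"
    using p fin by (intro subset_prob_union_bound[of _ _ _ "\<lambda>_. True" "\<lambda>k S. \<not> cayley_reach G S d k"]) auto
  also have "\<dots> \<le> (\<Sum>k\<in>carrier G - {\<one>}. exp (- (1 + \<epsilon> / 2) * L))"
  proof (rule sum_mono)
    fix k assume k: "k \<in> carrier G - {\<one>}"
    have "subset_prob p' (carrier G) (\<lambda>S. \<not> cayley_reach G S d k) \<le> subset_prob p (carrier G) (\<lambda>S. \<not> cayley_reach G S d k)"
      using p by (intro subset_prob_antimono_in_p[OF fin _ _ _ antimono_not_cayley_reach]) auto
    also have "\<dots> \<le> exp (- (1 + \<epsilon> / 2) * L)"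
      using k p by (intro prob_not_cayley_reach_le[OF N_def L_def fin large \<epsilon> d]) auto
    finally show "subset_prob p' (carrier G) (\<lambda>S. True \<and> \<not> cayley_reach G S d k) \<le> exp (- (1 + \<epsilon> / 2) * L)"
      by simp
  qed
  also have "\<dots> \<le> N * exp (- (1 + \<epsilon> / 2) * L)"
    using fin by (simp add: N_def card_Diff_subset)
  finally show ?thesis .
qed

end

lemma square_le_of_le_d_bound:
  assumes "0 < \<gamma>" "real d \<le> d_bound \<gamma> N" "order_large_for \<epsilon> N"
  shows "real d ^ 2 \<le> ln (real N) / (2 * ln (ln (real N)))"
proof -
  define q where "q = ln (real N) / (2 * ln (ln (real N)))"
  have "0 < ln (real N)" "1 \<le> ln (ln (real N))" using assms(3) by (simp_all add: order_large_for_def Let_def)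
  then have q: "0 \<le> q" unfolding q_def by (intro divide_nonneg_pos) linarith+
  have "real d \<le> (1 - \<gamma>) * sqrt q" using assms(2) by (simp add: d_bound_def q_def)
  also have "\<dots> \<le> sqrt q" using assms(1) q by (simp add: algebra_simps)
  finally have "real d ^ 2 \<le> (sqrt q) ^ 2" by (rule power_mono) simp
  then show ?thesis using q by (simp add: q_def)
qed

context group
begin

lemma prob_random_subset_cayley_diam_gt_le:
  fixes \<epsilon> p L :: real
  assumes N_def: "N = card (carrier G)" and L_def: "L = ln (real N)"
    and fin: "finite (carrier G)" and large: "order_large_for \<epsilon> N" and \<epsilon>: "\<epsilon> > 0"
    and d: "2 \<le> d" "real d ^ 2 \<le> L / (2 * ln L)"
    and p: "root d (fact d * (1 + \<epsilon>) * L / real N ^ (d - 1)) \<le> p" "p \<le> 1"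
  shows "measure_pmf.prob (random_subset G p) {f. cayley_diam G {g \<in> carrier G. f g} > enat d}
           \<le> exp (- (\<epsilon> * L / 2))"
proof -
  define p\<^sub>0 where "p\<^sub>0 = root d (fact d * (1 + \<epsilon>) * L / real N ^ (d - 1))"
  have "0 < L" using large by (simp add: order_large_for_def Let_def L_def)
  moreover have "N \<noteq> 0" by (rule ccontr) (use \<open>0 < L\<close> in \<open>simp add: L_def\<close>)
  ultimately have "0 < fact d * (1 + \<epsilon>) * L / real N ^ (d - 1)" using \<epsilon> by simp
  then have p\<^sub>0: "0 < p\<^sub>0" "p\<^sub>0 \<le> p" "p\<^sub>0 ^ d = fact d * (1 + \<epsilon>) * L / real N ^ (d - 1)"
    using d p by (simp_all add: p\<^sub>0_def)
  have "measure_pmf.prob (random_subset G p) {f. cayley_diam G {g \<in> carrier G. f g} > enat d}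
      = subset_prob p (carrier G) (\<lambda>S. enat d < cayley_diam G S)"
    unfolding random_subset_def using p(2) p\<^sub>0(1,2) by (intro measure_Pi_bernoulli_eq_subset_prob[OF fin]) auto
  also have "\<dots> \<le> N * exp (- (1 + \<epsilon> / 2) * L)"
    by (rule prob_cayley_diam_gt_le[OF N_def L_def fin large \<epsilon> d p\<^sub>0(1,2) p(2) p\<^sub>0(3)])
  also have "\<dots> = exp (L + - (1 + \<epsilon> / 2) * L)"
    using \<open>N \<noteq> 0\<close> by (simp add: L_def exp_add)
  also have "\<dots> = exp (- (\<epsilon> * L / 2))" by (simp add: algebra_simps)
  finally show ?thesis .
qed

end

theorem theorem1:
  fixes \<epsilon> \<gamma> \<delta> :: real
  assumes "\<epsilon> > 0" and "0 < \<gamma>" and "\<gamma> < 1" and "\<delta> > 0"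
  shows "\<exists>N0::nat. \<forall>N \<ge> N0. \<forall>(G :: ('a, 'b) monoid_scheme) (d :: nat) (p :: real).
           group G \<and> finite (carrier G) \<and> card (carrier G) = N \<and>
           2 \<le> d \<and> real d \<le> d_bound \<gamma> N \<and>
           root d (fact d * (1 + \<epsilon>) * ln (real N) / real N ^ (d - 1)) \<le> p \<and> p \<le> 1
           \<longrightarrow> measure_pmf.prob (random_subset G p)
                 {f. cayley_diam G {g \<in> carrier G. f g} > enat d} < \<delta>"
proof -
  have "\<forall>\<^sub>F x in at_top. exp (- (\<epsilon> * ln x / 2)) < \<delta>" using assms(1,4) by real_asymp
  from eventually_conj[OF eventually_order_large_for[OF assms(1)]
      eventually_compose_filterlim[OF this filterlim_real_sequentially]]
  obtain N0 where N0: "\<And>N. N \<ge> N0 \<Longrightarrow> order_large_for \<epsilon> N \<and> exp (- (\<epsilon> * ln (real N) / 2)) < \<delta>"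
    by (auto simp: eventually_sequentially)
  have "measure_pmf.prob (random_subset G p) {f. cayley_diam G {g \<in> carrier G. f g} > enat d} < \<delta>"
    if "N0 \<le> N" "group G" "finite (carrier G)" "card (carrier G) = N" "2 \<le> d" "real d \<le> d_bound \<gamma> N"
      "root d (fact d * (1 + \<epsilon>) * ln (real N) / real N ^ (d - 1)) \<le> p" "p \<le> 1"
    for N G d p
  proof -
    interpret group G by fact
    have large: "order_large_for \<epsilon> N" and small: "exp (- (\<epsilon> * ln (real N) / 2)) < \<delta>"
      using N0[OF \<open>N0 \<le> N\<close>] by auto
    have "measure_pmf.prob (random_subset G p) {f. cayley_diam G {g \<in> carrier G. f g} > enat d}
        \<le> exp (- (\<epsilon> * ln (real N) / 2))"
      using that square_le_of_le_d_bound[OF assms(2) _ large]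
      by (intro prob_random_subset_cayley_diam_gt_le[OF _ refl _ large assms(1)]) auto
    then show ?thesis using small by linarith
  qed
  then show ?thesis by blast
qed

end
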